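(* Let $G$ be a reaction network with one-dimensional stoichiometric subspace and suppose $cap_{pos}(G)=2N+1$ with $0\le N<+\infty$. If for a rate-constant vector $\kappa^*$ and a total-constant vector $c^*$, $G$ has $2N+1$ nondegenerate positive steady states in $\mathcal P_{c^*}$, then $N+1$ of them are stable if $\sum_{j\in\mathcal L}(\beta_{1j}-\alpha_{1j})\kappa^*_j\prod_{i\in\mathcal J}|A_i|^{\alpha_{ij}}\prod_{i\in\{1,\dots,s\}\setminus\mathcal J}B_i^{\alpha_{ij}}\prod_{k\in\mathcal H,\,k\ne\tau}\Big(\frac{B_k}{|A_k|}-\frac{A_k}{|A_k|}\frac{B_\tau}{A_\tau}\Big)^{\gamma_{kj}}>0$ holds, and $N$ of them are stable if this inequality does not hold (the quantities being computed from $c^*$).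
   Context: A reaction network $G$ has species $X_1,\dots,X_s$ and $m$ reactions $\sum_{i}\alpha_{ij}X_i\to\sum_i\beta_{ij}X_i$, $\alpha_{ij},\beta_{ij}\in\mathbb Z_{\ge0}$, $(\alpha_{1j},\dots,\alpha_{sj})\neq(\beta_{1j},\dots,\beta_{sj})$. $\mathcal N$ has entries $\beta_{ij}-\alpha_{ij}$, $S=\mathrm{im}\,\mathcal N$. For $\kappa\in\mathbb R^m_{>0}$, $f(\kappa;x)=\mathcal N(\kappa_1\prod_i x_i^{\alpha_{i1}},\dots,\kappa_m\prod_i x_i^{\alpha_{im}})^\top$. Since $S$ is one-dimensional, species are labelled so that $\beta_{11}-\alpha_{11}\ne0$; for $c\in\mathbb R^{s-1}$, $\mathcal P_c=\{x\in\mathbb R^s_{\ge0}:(\beta_{i1}-\alpha_{i1})x_1-(\beta_{11}-\alpha_{11})x_i=c_{i-1},\ i=2,\dots,s\}$. A steady state is $x\ge0$ with $f(\kappa;x)=0$; positive if $x>0$; nondegenerate if $\mathrm{Jac}_f(x)(S)=S$; stable if nondegenerate and all nonzero eigenvalues of $\mathrm{Jac}_f(x)$ have negative real parts. $cap_{pos}(G)$ is the maximal $N\in\mathbb Z_{\ge0}\cup\{+\infty\}$ such that for some $\kappa,c$, $G$ has $N$ positive steady states in $\mathcal P_c$. Notation for $c^*$: $A_1=1,B_1=0$, $A_i=\frac{\beta_{i1}-\alpha_{i1}}{\beta_{11}-\alpha_{11}}$, $B_i=-\frac{c^*_{i-1}}{\beta_{11}-\alpha_{11}}$ ($i\ge2$).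 $[i]=\{k:A_k\ne0,B_k/A_k=B_i/A_i\}$ if $A_i\ne0$, $[i]=\{k:A_k=0\}$ otherwise; species labelled so that $1,\dots,r$ represent the $r$ distinct classes. $\varphi_k=\min_j\sum_{i\in[k]}\alpha_{ij}$, $\gamma_{kj}=\sum_{i\in[k]}\alpha_{ij}-\varphi_k$. $\mathcal J=\{i:A_i\ne0\}$, $\mathcal H=\{k\in\{1,\dots,r\}\cap\mathcal J:\gamma_{k1},\dots,\gamma_{km}\text{ not all equal}\}$. Standing assumption: if for some rate constants $G$ has $N$ positive steady states in $\mathcal P_{c^*}$ with $0<N<\infty$, species are labelled so that $1\in\mathcal H$. $I_i=(-B_i/A_i,+\infty)$ if $A_i>0$, $(0,+\infty)$ if $A_i=0$, $(0,-B_i/A_i)$ if $A_i<0$; $I=\bigcap_{k\in\mathcal H}I_k$; $\tau\in\mathcal H$ has $A_\tau>0$ with $-B_\tau/A_\tau$ the left endpoint of $I$; $\mathcal L=\{j:\gamma_{\tau j}=0\}$. *)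

theory Defs
  imports "HOL-Analysis.Analysis" "HOL-Library.Extended_Nat"
begin

text \<open>Species are the elements of a finite type 's (s = CARD('s)), reactions the
elements of a finite type 'r (m = CARD('r)).  alpha i j, beta i j are the
stoichiometric coefficients of species i in the reactant/product of reaction j.\<close>

definition stoich_mat :: "('s::finite \<Rightarrow> 'r::finite \<Rightarrow> nat) \<Rightarrow> ('s \<Rightarrow> 'r \<Rightarrow> nat) \<Rightarrow> real^'r^'s" where
  "stoich_mat \<alpha> \<beta> = (\<chi> i j. real (\<beta> i j) - real (\<alpha> i j))"

definition stoich_space :: "('s::finite \<Rightarrow> 'r::finite \<Rightarrow> nat) \<Rightarrow> ('s \<Rightarrow> 'r \<Rightarrow> nat) \<Rightarrow> (real^'s) set" where
  "stoich_space \<alpha> \<beta> = range (\<lambda>v. stoich_mat \<alpha> \<beta> *v v)"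

definition reaction_network :: "('s::finite \<Rightarrow> 'r::finite \<Rightarrow> nat) \<Rightarrow> ('s \<Rightarrow> 'r \<Rightarrow> nat) \<Rightarrow> bool" where
  "reaction_network \<alpha> \<beta> \<longleftrightarrow> (\<forall>j. (\<lambda>i. \<alpha> i j) \<noteq> (\<lambda>i. \<beta> i j))"

definition rate_vec :: "('s::finite \<Rightarrow> 'r::finite \<Rightarrow> nat) \<Rightarrow> real^'r \<Rightarrow> real^'s \<Rightarrow> real^'r" where
  "rate_vec \<alpha> \<kappa> x = (\<chi> j. \<kappa>$j * (\<Prod>i\<in>UNIV. (x$i) ^ (\<alpha> i j)))"

definition ma_field :: "('s::finite \<Rightarrow> 'r::finite \<Rightarrow> nat) \<Rightarrow> ('s \<Rightarrow> 'r \<Rightarrow> nat) \<Rightarrow> real^'r \<Rightarrow> real^'s \<Rightarrow> real^'s" where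
  "ma_field \<alpha> \<beta> \<kappa> x = stoich_mat \<alpha> \<beta> *v rate_vec \<alpha> \<kappa> x"

text \<open>Stoichiometric compatibility class P_c; sp1 is species 1, rc1 reaction 1.
 c i (for i \<noteq> sp1) plays the role of the component c_{i-1}.\<close>
definition compat_class :: "('s::finite \<Rightarrow> 'r::finite \<Rightarrow> nat) \<Rightarrow> ('s \<Rightarrow> 'r \<Rightarrow> nat) \<Rightarrow> 's \<Rightarrow> 'r \<Rightarrow> ('s \<Rightarrow> real) \<Rightarrow> (real^'s) set" where
  "compat_class \<alpha> \<beta> sp1 rc1 c = {x. (\<forall>i. 0 \<le> x$i) \<and>
     (\<forall>i. i \<noteq> sp1 \<longrightarrow> stoich_mat \<alpha> \<beta> $ i $ rc1 * x$sp1 - stoich_mat \<alpha> \<beta> $ sp1 $ rc1 * x$i = c i)}"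

definition pos_steady_states :: "('s::finite \<Rightarrow> 'r::finite \<Rightarrow> nat) \<Rightarrow> ('s \<Rightarrow> 'r \<Rightarrow> nat) \<Rightarrow> 's \<Rightarrow> 'r \<Rightarrow> real^'r \<Rightarrow> ('s \<Rightarrow> real) \<Rightarrow> (real^'s) set" where
  "pos_steady_states \<alpha> \<beta> sp1 rc1 \<kappa> c = {x \<in> compat_class \<alpha> \<beta> sp1 rc1 c. (\<forall>i. 0 < x$i) \<and> ma_field \<alpha> \<beta> \<kappa> x = 0}"

definition ss_count :: "('s::finite \<Rightarrow> 'r::finite \<Rightarrow> nat) \<Rightarrow> ('s \<Rightarrow> 'r \<Rightarrow> nat) \<Rightarrow> 's \<Rightarrow> 'r \<Rightarrow> real^'r \<Rightarrow> ('s \<Rightarrow> real) \<Rightarrow> enat" where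
  "ss_count \<alpha> \<beta> sp1 rc1 \<kappa> c = (let X = pos_steady_states \<alpha> \<beta> sp1 rc1 \<kappa> c in
     if finite X then enat (card X) else \<infinity>)"

definition cap_pos :: "('s::finite \<Rightarrow> 'r::finite \<Rightarrow> nat) \<Rightarrow> ('s \<Rightarrow> 'r \<Rightarrow> nat) \<Rightarrow> 's \<Rightarrow> 'r \<Rightarrow> enat" where
  "cap_pos \<alpha> \<beta> sp1 rc1 = (SUP p \<in> {(\<kappa>, c). \<forall>j. 0 < \<kappa>$j}. ss_count \<alpha> \<beta> sp1 rc1 (fst p) (snd p))"

definition ma_jac :: "('s::finite \<Rightarrow> 'r::finite \<Rightarrow> nat) \<Rightarrow> ('s \<Rightarrow> 'r \<Rightarrow> nat) \<Rightarrow> real^'r \<Rightarrow> real^'s \<Rightarrow> real^'s^'s" where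
  "ma_jac \<alpha> \<beta> \<kappa> x = jacobian (ma_field \<alpha> \<beta> \<kappa>) (at x)"

definition nondegenerate :: "('s::finite \<Rightarrow> 'r::finite \<Rightarrow> nat) \<Rightarrow> ('s \<Rightarrow> 'r \<Rightarrow> nat) \<Rightarrow> real^'r \<Rightarrow> real^'s \<Rightarrow> bool" where
  "nondegenerate \<alpha> \<beta> \<kappa> x \<longleftrightarrow>
     (\<lambda>v. ma_jac \<alpha> \<beta> \<kappa> x *v v) ` stoich_space \<alpha> \<beta> = stoich_space \<alpha> \<beta>"

definition real_mat_eigenvalue :: "real^'n^'n \<Rightarrow> complex \<Rightarrow> bool" where
  "real_mat_eigenvalue M z \<longleftrightarrow>
     (\<exists>v::complex^'n. v \<noteq> 0 \<and> (\<chi> i j. complex_of_real (M$i$j)) *v v = z *s v)"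

definition stable_ss :: "('s::finite \<Rightarrow> 'r::finite \<Rightarrow> nat) \<Rightarrow> ('s \<Rightarrow> 'r \<Rightarrow> nat) \<Rightarrow> real^'r \<Rightarrow> real^'s \<Rightarrow> bool" where
  "stable_ss \<alpha> \<beta> \<kappa> x \<longleftrightarrow> nondegenerate \<alpha> \<beta> \<kappa> x \<and>
     (\<forall>z. real_mat_eigenvalue (ma_jac \<alpha> \<beta> \<kappa> x) z \<and> z \<noteq> 0 \<longrightarrow> Re z < 0)"

definition coefA :: "('s::finite \<Rightarrow> 'r::finite \<Rightarrow> nat) \<Rightarrow> ('s \<Rightarrow> 'r \<Rightarrow> nat) \<Rightarrow> 's \<Rightarrow> 'r \<Rightarrow> 's \<Rightarrow> real" where
  "coefA \<alpha> \<beta> sp1 rc1 i = (if i = sp1 then 1 else stoich_mat \<alpha> \<beta> $ i $ rc1 / stoich_mat \<alpha> \<beta> $ sp1 $ rc1)"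

definition coefB :: "('s::finite \<Rightarrow> 'r::finite \<Rightarrow> nat) \<Rightarrow> ('s \<Rightarrow> 'r \<Rightarrow> nat) \<Rightarrow> 's \<Rightarrow> 'r \<Rightarrow> ('s \<Rightarrow> real) \<Rightarrow> 's \<Rightarrow> real" where
  "coefB \<alpha> \<beta> sp1 rc1 c i = (if i = sp1 then 0 else - c i / stoich_mat \<alpha> \<beta> $ sp1 $ rc1)"

definition species_class :: "('s \<Rightarrow> real) \<Rightarrow> ('s \<Rightarrow> real) \<Rightarrow> 's \<Rightarrow> 's set" where
  "species_class A B i = (if A i \<noteq> 0 then {k. A k \<noteq> 0 \<and> B k / A k = B i / A i} else {k. A k = 0})"

definition phi_class :: "('s::finite \<Rightarrow> 'r::finite \<Rightarrow> nat) \<Rightarrow> ('s \<Rightarrow> real) \<Rightarrow> ('s \<Rightarrow> real) \<Rightarrow> 's \<Rightarrow> nat" where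
  "phi_class \<alpha> A B k = Min (range (\<lambda>j. \<Sum>i\<in>species_class A B k. \<alpha> i j))"

definition gamma_class :: "('s::finite \<Rightarrow> 'r::finite \<Rightarrow> nat) \<Rightarrow> ('s \<Rightarrow> real) \<Rightarrow> ('s \<Rightarrow> real) \<Rightarrow> 's \<Rightarrow> 'r \<Rightarrow> nat" where
  "gamma_class \<alpha> A B k j = (\<Sum>i\<in>species_class A B k. \<alpha> i j) - phi_class \<alpha> A B k"

definition setJ :: "('s \<Rightarrow> real) \<Rightarrow> 's set" where
  "setJ A = {i. A i \<noteq> 0}"

definition representatives :: "('s \<Rightarrow> real) \<Rightarrow> ('s \<Rightarrow> real) \<Rightarrow> 's set \<Rightarrow> bool" where
  "representatives A B R \<longleftrightarrow> (\<forall>i. \<exists>k\<in>R. i \<in> species_class A B k) \<and>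
     (\<forall>k\<in>R. \<forall>k'\<in>R. species_class A B k = species_class A B k' \<longrightarrow> k = k')"

definition setH :: "('s::finite \<Rightarrow> 'r::finite \<Rightarrow> nat) \<Rightarrow> ('s \<Rightarrow> real) \<Rightarrow> ('s \<Rightarrow> real) \<Rightarrow> 's set \<Rightarrow> 's set" where
  "setH \<alpha> A B R = {k \<in> R \<inter> setJ A. \<not> (\<forall>j j'. gamma_class \<alpha> A B k j = gamma_class \<alpha> A B k j')}"

definition interval_I :: "('s \<Rightarrow> real) \<Rightarrow> ('s \<Rightarrow> real) \<Rightarrow> 's \<Rightarrow> real set" where
  "interval_I A B i = (if A i > 0 then {- B i / A i <..}
                       else if A i = 0 then {0 <..} else {0 <..< - B i / A i})"

definition setL :: "('s::finite \<Rightarrow> 'r::finite \<Rightarrow> nat) \<Rightarrow> ('s \<Rightarrow> real) \<Rightarrow> ('s \<Rightarrow> real) \<Rightarrow> 's \<Rightarrow> 'r set" where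
  "setL \<alpha> A B \<tau> = {j. gamma_class \<alpha> A B \<tau> j = 0}"

end

theory Submission
  imports Defs
begin

lemma no_root_imp_same_sign:
  fixes g :: "real \<Rightarrow> real"
  assumes "continuous_on {a..b} g" "a \<le> b" "\<forall>t\<in>{a..b}. g t \<noteq> 0"
  shows "0 < g a \<longleftrightarrow> 0 < g b"
proof
  assume "0 < g a"
  show "0 < g b"
  proof (rule ccontr)
    assume "\<not> 0 < g b"
    with \<open>0 < g a\<close> assms(1,2) obtain t where "a \<le> t" "t \<le> b" "g t = 0"
      using IVT2'[of g b 0 a] by force
    with assms(3) show False by auto
  qed
next
  assume "0 < g b"
  show "0 < g a"
  proof (rule ccontr)
    assume "\<not> 0 < g a"
    with \<open>0 < g b\<close> assms(1,2) obtain t where "a \<le> t" "t \<le> b" "g t = 0"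
      using IVT'[of g a 0 b] by force
    with assms(3) show False by auto
  qed
qed

lemma sign_change_imp_root:
  fixes g :: "real \<Rightarrow> real"
  assumes "continuous_on {a..b} g" "a \<le> b" "g a * g b < 0"
  obtains t where "a < t" "t < b" "g t = 0"
proof -
  have "\<exists>t\<in>{a..b}. g t = 0"
  proof (rule ccontr)
    assume "\<not> (\<exists>t\<in>{a..b}. g t = 0)"
    then have "0 < g a \<longleftrightarrow> 0 < g b" using no_root_imp_same_sign[OF assms(1,2)] by blast
    with assms(3) show False by (auto simp: mult_less_0_iff)
  qed
  then obtain t where "t \<in> {a..b}" "g t = 0" by blast
  moreover have "t \<noteq> a" "t \<noteq> b" using assms(3) \<open>g t = 0\<close> by auto
  ultimately show thesis using that by (metis atLeastAtMost_iff order_le_less)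
qed

lemma sign_alternations_imp_roots:
  fixes g :: "real \<Rightarrow> real" and z :: "nat \<Rightarrow> real"
  assumes "\<forall>i<m. z i < z (Suc i)" "continuous_on {z 0..z m} g"
    "\<forall>i<m. g (z i) * g (z (Suc i)) < 0"
  shows "\<exists>S. finite S \<and> card S = m \<and> S \<subseteq> {t. z 0 < t \<and> t < z m \<and> g t = 0}"
  using assms
proof (induction m)
  case 0
  show ?case by auto
next
  case (Suc m)
  have step: "z m < z (Suc m)" using Suc.prems(1) by simp
  have "continuous_on {z 0..z m} g"
    using Suc.prems(2) by (rule continuous_on_subset) (use step in auto)
  with Suc obtain S where S: "finite S" "card S = m" "S \<subseteq> {t. z 0 < t \<and> t < z m \<and> g t = 0}"
    by auto
  have "z 0 \<le> z m"
  proof (cases "m = 0")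
    case False
    then obtain t where "t \<in> S" using S(1,2) by (metis card.empty ex_in_conv)
    then show ?thesis using S(3) by auto
  qed simp
  have "continuous_on {z m..z (Suc m)} g"
    using Suc.prems(2) by (rule continuous_on_subset) (use \<open>z 0 \<le> z m\<close> in auto)
  then obtain r where r: "z m < r" "r < z (Suc m)" "g r = 0"
    using sign_change_imp_root[of "z m" "z (Suc m)" g] Suc.prems(3) step by auto
  have "r \<notin> S" using S(3) r by auto
  then show ?case
    using S r \<open>z 0 \<le> z m\<close> step by (intro exI[of _ "insert r S"]) auto
qed

lemma simple_root_local_signs:
  fixes g :: "real \<Rightarrow> real"
  assumes "(g has_real_derivative d) (at z)" "g z = 0" "d \<noteq> 0"
  obtains e where "e > 0"
    "\<And>h. 0 < h \<Longrightarrow> h < e \<Longrightarrow> (0 < g (z - h) \<longleftrightarrow> d < 0) \<and> (0 < g (z + h) \<longleftrightarrow> 0 < d)"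
proof (cases "d > 0")
  case True
  obtain e1 where "e1 > 0" "\<And>h. 0 < h \<Longrightarrow> h < e1 \<Longrightarrow> g z < g (z + h)"
    using DERIV_pos_inc_right[OF assms(1) True] by blast
  moreover obtain e2 where "e2 > 0" "\<And>h. 0 < h \<Longrightarrow> h < e2 \<Longrightarrow> g (z - h) < g z"
    using DERIV_pos_inc_left[OF assms(1) True] by blast
  ultimately show thesis
    using that[of "min e1 e2"] True assms(2) by force
next
  case False
  then have "d < 0" using assms(3) by simp
  obtain e1 where "e1 > 0" "\<And>h. 0 < h \<Longrightarrow> h < e1 \<Longrightarrow> g z > g (z + h)"
    using DERIV_neg_dec_right[OF assms(1) \<open>d < 0\<close>] by blast
  moreover obtain e2 where "e2 > 0" "\<And>h. 0 < h \<Longrightarrow> h < e2 \<Longrightarrow> g (z - h) > g z"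
    using DERIV_neg_dec_left[OF assms(1) \<open>d < 0\<close>] by blast
  ultimately show thesis
    using that[of "min e1 e2"] \<open>d < 0\<close> assms(2) by force
qed

lemma simple_roots_signed_count:
  fixes g g' :: "real \<Rightarrow> real"
  assumes "finite Z" "Z \<subseteq> {a<..<b}" "a \<le> b" "continuous_on {a..b} g"
    "\<forall>t\<in>{a..b}. g t = 0 \<longleftrightarrow> t \<in> Z"
    "\<forall>z\<in>Z. (g has_real_derivative g' z) (at z) \<and> g' z \<noteq> 0"
  shows "(\<Sum>z\<in>Z. if g' z < 0 then 1 else -1) = of_bool (0 < g a) - (of_bool (0 < g b) :: int)"
  using assms
proof (induction Z arbitrary: a rule: finite_linorder_min_induct)
  case empty
  then show ?case using no_root_imp_same_sign[of a b g] by auto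
next
  case (insert z Z)
  have z: "a < z" "z < b" "g z = 0" using insert.prems(1,4) by auto
  have der: "(g has_real_derivative g' z) (at z)" "g' z \<noteq> 0" using insert.prems(5) by auto
  obtain e where e: "e > 0"
    "\<And>h. 0 < h \<Longrightarrow> h < e \<Longrightarrow> (0 < g (z - h) \<longleftrightarrow> g' z < 0) \<and> (0 < g (z + h) \<longleftrightarrow> 0 < g' z)"
    using simple_root_local_signs[OF der(1) z(3) der(2)] by blast
  define h where "h = Min (insert e (insert (z - a) ((\<lambda>y. y - z) ` insert b Z))) / 2"
  have gaps: "0 < Min (insert e (insert (z - a) ((\<lambda>y. y - z) ` insert b Z)))"
    using insert.hyps(1,2) e(1) z by (auto simp: Min_gr_iff)
  have h: "0 < h" "h < e" "h < z - a" "z + h < b" "\<forall>y\<in>Z. z + h < y"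
  proof -
    let ?M = "Min (insert e (insert (z - a) ((\<lambda>y. y - z) ` insert b Z)))"
    have "?M \<le> x" if "x \<in> insert e (insert (z - a) ((\<lambda>y. y - z) ` insert b Z))" for x
      using insert.hyps(1) that by (intro Min_le) auto
    then have "?M \<le> e" "?M \<le> z - a" "?M \<le> b - z" "\<forall>y\<in>Z. ?M \<le> y - z"
      by auto
    then show "0 < h" "h < e" "h < z - a" "z + h < b" "\<forall>y\<in>Z. z + h < y"
      using gaps unfolding h_def by (auto simp: field_simps)
  qed
  have left: "0 < g a \<longleftrightarrow> g' z < 0"
  proof -
    have "continuous_on {a..z - h} g"
      using insert.prems(3) by (rule continuous_on_subset) (use h z in auto)
    moreover have "\<forall>t\<in>{a..z - h}. g t \<noteq> 0"
      using insert.prems(4) insert.hyps(2) h z by fastforce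
    ultimately have "0 < g a \<longleftrightarrow> 0 < g (z - h)"
      using no_root_imp_same_sign[of a "z - h" g] h by simp
    then show ?thesis using e(2)[OF h(1,2)] by simp
  qed
  have "(\<Sum>y\<in>Z. if g' y < 0 then 1 else -1) = of_bool (0 < g (z + h)) - (of_bool (0 < g b) :: int)"
  proof (rule insert.IH)
    show "Z \<subseteq> {z + h<..<b}" using h(5) insert.prems(1) by auto
    show "continuous_on {z + h..b} g"
      using insert.prems(3) by (rule continuous_on_subset) (use h z in auto)
    show "\<forall>t\<in>{z + h..b}. g t = 0 \<longleftrightarrow> t \<in> Z"
      using insert.prems(4) h z by auto
  qed (use insert.prems(5) h in auto)
  moreover have "0 < g (z + h) \<longleftrightarrow> 0 < g' z" using e(2)[OF h(1,2)] by simp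
  ultimately show ?case
    using insert.hyps(1,2) left der(2) by (auto simp: linorder_neq_iff)
qed

lemma simple_root_imp_sign_change:
  fixes g :: "real \<Rightarrow> real"
  assumes "a < z" "z < b" "continuous_on {a..b} g" "\<forall>t\<in>{a..b}. g t = 0 \<longleftrightarrow> t = z"
    "(g has_real_derivative d) (at z)" "d \<noteq> 0"
  shows "g a * g b < 0"
proof -
  have "(if d < 0 then 1 else -1) = of_bool (0 < g a) - (of_bool (0 < g b) :: int)"
    using simple_roots_signed_count[of "{z}" a b g "\<lambda>_. d"] assms by auto
  moreover have "g a \<noteq> 0" "g b \<noteq> 0" using assms(1,2,4) by auto
  ultimately show ?thesis
    by (cases "0 < g a"; cases "0 < g b") (auto simp: mult_less_0_iff split: if_splits)
qed

lemma sum_sign_eq_card: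
  assumes "finite Z"
  shows "(\<Sum>z\<in>Z. if P z then 1 else -1) = 2 * int (card {z\<in>Z. P z}) - int (card Z)"
proof -
  have "card Z = card {z\<in>Z. P z} + card {z\<in>Z. \<not> P z}"
    using assms by (subst card_Un_disjoint[symmetric]) (auto intro: arg_cong[where f = card])
  then show ?thesis using assms by (simp add: sum.If_cases Int_def)
qed

lemma interlacing_points:
  fixes T D :: "real set"
  assumes "finite T" "T \<noteq> {}" "T \<subseteq> D" "open D" "is_interval D"
  obtains w :: "nat \<Rightarrow> real" where
    "\<forall>i\<le>card T. w i \<in> D - T" "\<forall>i<card T. w i < w (Suc i)"
    "\<forall>i<card T. \<exists>t. T \<inter> {w i..w (Suc i)} = {t}" "T \<subseteq> {w 0<..<w (card T)}"
proof -
  define n where "n = card T"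
  define rt where "rt = (!) (sorted_list_of_set T)"
  have n: "0 < n" using assms(1,2) by (simp add: n_def card_gt_0_iff)
  have rt_less: "rt i < rt j" if "i < j" "j < n" for i j
    using sorted_wrt_nth_less[OF strict_sorted_list_of_set[of T] that(1)] that
    by (simp add: rt_def n_def)
  have T_rt: "T = rt ` {..<n}"
  proof -
    have "T = set (sorted_list_of_set T)" using assms(1) by simp
    then show ?thesis by (auto simp: rt_def n_def set_conv_nth)
  qed
  obtain e where e: "e > 0" "ball (rt 0) e \<subseteq> D" "ball (rt (n - 1)) e \<subseteq> D"
  proof -
    have "rt 0 \<in> D" "rt (n - 1) \<in> D" using T_rt n assms(3) by auto
    then obtain e1 e2 where "e1 > 0" "ball (rt 0) e1 \<subseteq> D" "e2 > 0" "ball (rt (n - 1)) e2 \<subseteq> D"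
      using assms(4) openE by metis
    then show thesis using that[of "min e1 e2"] by (auto simp: ball_min_Int)
  qed
  define u where "u i = (if i = 0 then rt 0 - e / 2 else if i \<le> n then rt (i - 1)
    else rt (n - 1) + e / 2 * real (i - n))" for i
  have "u i < u (Suc i)" for i
  proof -
    consider "i = 0" | "0 < i" "i < n" | "n \<le> i" by linarith
    then show ?thesis
    proof cases
      case 1
      then show ?thesis using e(1) n by (simp add: u_def)
    next
      case 2
      then show ?thesis using rt_less[of "i - 1" i] by (simp add: u_def)
    next
      case 3
      then show ?thesis using e(1) n by (auto simp: u_def of_nat_diff Suc_diff_le)
    qed
  qed
  then have u_mono: "strict_mono u" by (rule strict_mono_Suc_iff[THEN iffD2, rule_format])
  have u_rt: "u (Suc i) = rt i" if "i < n" for i using that by (simp add: u_def)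
  have u_D: "u i \<in> D" if i: "i \<le> Suc n" for i
  proof -
    consider "i = 0" | "0 < i" "i \<le> n" | "i = Suc n" using i by (metis le_SucE neq0_conv)
    then show ?thesis
    proof cases
      case 1 then show ?thesis using e by (auto simp: u_def dist_real_def)
    next
      case 2 then show ?thesis using T_rt assms(3) by (auto simp: u_def)
    next
      case 3 then show ?thesis using e by (auto simp: u_def dist_real_def)
    qed
  qed
  define w where "w i = (u i + u (Suc i)) / 2" for i
  have w_u: "u i < w i" "w i < u (Suc i)" for i
    using strict_monoD[OF u_mono, of i "Suc i"] by (auto simp: w_def)
  have T_u: "T = u ` {1..n}"
  proof -
    have "u ` {1..n} = (\<lambda>i. u (Suc i)) ` {..<n}"
      by (simp only: image_Suc_lessThan[symmetric] image_image)
    also have "\<dots> = T" unfolding T_rt using u_rt by (intro image_cong) auto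
    finally show ?thesis by simp
  qed
  have u_notin_w: "u j \<notin> {w i..w (Suc i)}" if "j \<noteq> Suc i" for i j
  proof (cases "j \<le> i")
    case True
    then have "u j \<le> u i" using strict_mono_less_eq[OF u_mono] by blast
    then show ?thesis using w_u[of i] by auto
  next
    case False
    then have "u (Suc (Suc i)) \<le> u j" using that strict_mono_less_eq[OF u_mono] by simp
    then show ?thesis using w_u[of "Suc i"] by auto
  qed
  have u_in_w: "u j \<in> {w i..w (Suc i)} \<longleftrightarrow> j = Suc i" for i j
    using u_notin_w[of j i] w_u[of i] w_u[of "Suc i"] by (auto simp: less_imp_le)
  have w_notin_T: "w i \<notin> T" for i
  proof
    assume "w i \<in> T"
    then obtain j where j: "w i = u j" unfolding T_u by blast
    moreover have "w i \<le> w (Suc i)" using w_u[of i] w_u[of "Suc i"] by simp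
    ultimately have "j = Suc i" using u_in_w[of j i] by simp
    then show False using j w_u(2)[of i] by simp
  qed
  show thesis
  proof
    show "\<forall>i\<le>card T. w i \<in> D - T"
    proof (intro allI impI)
      fix i assume "i \<le> card T"
      then have "u i \<in> D" "u (Suc i) \<in> D" using u_D n_def by auto
      then have "w i \<in> D"
        using assms(5) w_u[of i] unfolding is_interval_1 by (meson less_imp_le)
      then show "w i \<in> D - T" using w_notin_T by simp
    qed
    show "\<forall>i<card T. w i < w (Suc i)"
      using w_u by (meson less_trans)
    show "\<forall>i<card T. \<exists>t. T \<inter> {w i..w (Suc i)} = {t}"
    proof (intro allI impI exI)
      fix i assume "i < card T"
      show "T \<inter> {w i..w (Suc i)} = {u (Suc i)}"
      proof (intro equalityI subsetI)
        fix t assume "t \<in> T \<inter> {w i..w (Suc i)}"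
        then obtain j where "t = u j" "u j \<in> {w i..w (Suc i)}" unfolding T_u by blast
        then show "t \<in> {u (Suc i)}" using u_in_w by simp
      next
        fix t assume "t \<in> {u (Suc i)}"
        moreover have "Suc i \<in> {1..n}" using \<open>i < card T\<close> n_def by simp
        ultimately show "t \<in> T \<inter> {w i..w (Suc i)}" unfolding T_u using u_in_w by blast
      qed
    qed
    show "T \<subseteq> {w 0<..<w (card T)}"
    proof
      fix t assume "t \<in> T"
      then obtain j where j: "1 \<le> j" "j \<le> n" "t = u j" unfolding T_u by auto
      have "w 0 < u 1" "u n < w n" using w_u[of 0] w_u[of n] by auto
      moreover have "u 1 \<le> u j" "u j \<le> u n" using j by (simp_all add: strict_mono_less_eq[OF u_mono])
      ultimately show "t \<in> {w 0<..<w (card T)}" using j n_def by auto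
    qed
  qed
qed
lemma small_perturbation_separates_root:
  fixes h q :: "real \<Rightarrow> real"
  assumes "finite W" "p \<in> W" "\<forall>w\<in>W. h w \<noteq> 0" "h t0 = 0" "q t0 \<noteq> 0" "e > 0"
  obtains \<epsilon> where "\<bar>\<epsilon>\<bar> < e" "\<forall>w\<in>W. 0 < (h w + \<epsilon> * q w) * h w"
    "(h t0 + \<epsilon> * q t0) * (h p + \<epsilon> * q p) < 0"
proof -
  define m where "m = Min ((\<lambda>w. \<bar>h w\<bar> / (\<bar>q w\<bar> + 1)) ` W)"
  have m: "0 < m" unfolding m_def using assms(1-3) by (subst Min_gr_iff) auto
  define \<delta> where "\<delta> = min m e / 2"
  define \<epsilon> where "\<epsilon> = (if 0 < q t0 * h p then - \<delta> else \<delta>)"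
  have \<delta>: "0 < \<delta>" "\<delta> < e" "\<delta> < m" using m assms(6) by (auto simp: \<delta>_def)
  have abs_\<epsilon>: "\<bar>\<epsilon>\<bar> = \<delta>" using \<delta> by (simp add: \<epsilon>_def)
  have keep: "0 < (h w + \<epsilon> * q w) * h w" if "w \<in> W" for w
  proof -
    have "m \<le> \<bar>h w\<bar> / (\<bar>q w\<bar> + 1)" using assms(1) that by (auto simp: m_def)
    then have "m * (\<bar>q w\<bar> + 1) \<le> \<bar>h w\<bar>" by (simp add: pos_le_divide_eq)
    moreover have "\<delta> * (\<bar>q w\<bar> + 1) \<le> m * (\<bar>q w\<bar> + 1)"
      using \<delta>(3) by (intro mult_right_mono) auto
    ultimately have "\<delta> * (\<bar>q w\<bar> + 1) \<le> \<bar>h w\<bar>" by linarith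
    then have "\<bar>\<epsilon> * q w\<bar> < \<bar>h w\<bar>" using \<delta>(1) by (simp add: abs_mult abs_\<epsilon> algebra_simps)
    then show ?thesis by (auto simp: zero_less_mult_iff abs_less_iff)
  qed
  have "\<epsilon> * q t0 * h p < 0"
    using \<delta>(1) assms(2,3,5) by (auto simp: \<epsilon>_def mult_less_0_iff zero_less_mult_iff linorder_neq_iff)
  moreover have "0 < (h p + \<epsilon> * q p) * h p" using keep assms(2) by blast
  ultimately have "(h t0 + \<epsilon> * q t0) * (h p + \<epsilon> * q p) < 0"
    using assms(4) by (auto simp: mult_less_0_iff zero_less_mult_iff)
  then show thesis using that abs_\<epsilon> \<delta>(2) keep by auto
qed

lemma cap_pos_bound:
  assumes "cap_pos \<alpha> \<beta> sp1 rc1 = enat M" "\<forall>j. 0 < \<kappa> $ j"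
  shows "finite (pos_steady_states \<alpha> \<beta> sp1 rc1 \<kappa> c)"
    and "card (pos_steady_states \<alpha> \<beta> sp1 rc1 \<kappa> c) \<le> M"
proof -
  have "ss_count \<alpha> \<beta> sp1 rc1 (fst (\<kappa>, c)) (snd (\<kappa>, c)) \<le> cap_pos \<alpha> \<beta> sp1 rc1"
    unfolding cap_pos_def by (rule SUP_upper) (use assms(2) in auto)
  then have "ss_count \<alpha> \<beta> sp1 rc1 \<kappa> c \<le> enat M" using assms(1) by simp
  then show "finite (pos_steady_states \<alpha> \<beta> sp1 rc1 \<kappa> c)"
    and "card (pos_steady_states \<alpha> \<beta> sp1 rc1 \<kappa> c) \<le> M"
    by (auto simp: ss_count_def Let_def split: if_splits)
qed

lemma differentiable_prod_at:
  fixes f :: "'i \<Rightarrow> 'a::real_normed_vector \<Rightarrow> real"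
  assumes "\<forall>i\<in>I. f i differentiable (at x)"
  shows "(\<lambda>x. \<Prod>i\<in>I. f i x) differentiable (at x)"
proof -
  from bchoice[OF assms[unfolded differentiable_def]] obtain f' where
    "\<forall>i\<in>I. (f i has_derivative f' i) (at x)" by blast
  then show ?thesis unfolding differentiable_def
    by (intro exI[of _ "\<lambda>y. \<Sum>i\<in>I. f' i y * (\<Prod>j\<in>I - {i}. f j x)"] has_derivative_prod) auto
qed

locale one_dim_network =
  fixes \<alpha> \<beta> :: "'s::finite \<Rightarrow> 'r::finite \<Rightarrow> nat" and sp1 :: 's and rc1 :: 'r
  assumes one_dim: "dim (stoich_space \<alpha> \<beta>) = 1"
    and label1: "stoich_mat \<alpha> \<beta> $ sp1 $ rc1 \<noteq> 0"
begin

abbreviation A :: "'s \<Rightarrow> real" where "A \<equiv> coefA \<alpha> \<beta> sp1 rc1"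

definition Avec :: "real^'s" where "Avec = (\<chi> i. A i)"

definition scalar_field :: "real^'r \<Rightarrow> real^'s \<Rightarrow> real" where
  "scalar_field \<kappa> y = (\<Sum>j\<in>UNIV. stoich_mat \<alpha> \<beta> $ sp1 $ j * \<kappa>$j * (\<Prod>i\<in>UNIV. (y$i) ^ \<alpha> i j))"

definition jac_eigenvalue :: "real^'r \<Rightarrow> real^'s \<Rightarrow> real" where
  "jac_eigenvalue \<kappa> y = frechet_derivative (scalar_field \<kappa>) (at y) Avec"

definition class_point :: "('s \<Rightarrow> real) \<Rightarrow> real \<Rightarrow> real^'s" where
  "class_point B t = (\<chi> i. A i * t + B i)"

lemma coefA_sp1 [simp]: "A sp1 = 1"
  by (simp add: coefA_def)

lemma Avec_nonzero: "Avec \<noteq> 0"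
  by (metis Avec_def coefA_sp1 vec_lambda_beta zero_index zero_neq_one)

text \<open>The stoichiometric matrix has rank one, and its columns are multiples of its column rc1.\<close>
lemma stoich_mat_eq: "stoich_mat \<alpha> \<beta> $ i $ j = A i * stoich_mat \<alpha> \<beta> $ sp1 $ j"
proof -
  let ?S = "stoich_space \<alpha> \<beta>"
  have col_S: "column j (stoich_mat \<alpha> \<beta>) \<in> ?S" for j
    unfolding stoich_space_def by (metis matrix_vector_mult_basis rangeI)
  define u where "u = column rc1 (stoich_mat \<alpha> \<beta>)"
  have "u \<noteq> 0" using label1 by (auto simp: u_def column_def vec_eq_iff)
  then have "span {u} = span ?S"
    using dim_eq_span[of "{u}" ?S] col_S[of rc1] one_dim by (simp add: u_def dim_insert)
  then have "column j (stoich_mat \<alpha> \<beta>) \<in> span {u}" using col_S span_superset by blast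
  then obtain k where k: "column j (stoich_mat \<alpha> \<beta>) = k *\<^sub>R u" by (auto simp: span_singleton)
  have "stoich_mat \<alpha> \<beta> $ i' $ j = k * stoich_mat \<alpha> \<beta> $ i' $ rc1" for i'
    using arg_cong[OF k, of "\<lambda>v. v $ i'"] by (simp add: column_def u_def)
  then show ?thesis using label1 by (simp add: coefA_def field_simps)
qed

lemma ma_field_eq: "ma_field \<alpha> \<beta> \<kappa> y = scalar_field \<kappa> y *\<^sub>R Avec"
  unfolding vec_eq_iff
proof
  fix i
  have "ma_field \<alpha> \<beta> \<kappa> y $ i
      = (\<Sum>j\<in>UNIV. stoich_mat \<alpha> \<beta> $ i $ j * (\<kappa>$j * (\<Prod>i\<in>UNIV. (y$i) ^ \<alpha> i j)))"
    by (simp add: ma_field_def rate_vec_def matrix_vector_mult_def)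
  also have "\<dots> = (\<Sum>j\<in>UNIV. A i * (stoich_mat \<alpha> \<beta> $ sp1 $ j * \<kappa>$j * (\<Prod>i\<in>UNIV. (y$i) ^ \<alpha> i j)))"
    by (intro sum.cong refl) (subst stoich_mat_eq[of i], simp add: mult_ac)
  finally show "ma_field \<alpha> \<beta> \<kappa> y $ i = (scalar_field \<kappa> y *\<^sub>R Avec) $ i"
    by (simp add: scalar_field_def Avec_def sum_distrib_left mult.commute)
qed

lemma stoich_space_eq: "stoich_space \<alpha> \<beta> = range (\<lambda>s. s *\<^sub>R Avec)"
proof (intro equalityI subsetI)
  fix w assume "w \<in> stoich_space \<alpha> \<beta>"
  then obtain v where v: "w = stoich_mat \<alpha> \<beta> *v v" by (auto simp: stoich_space_def)
  have "w = (\<Sum>j\<in>UNIV. stoich_mat \<alpha> \<beta> $ sp1 $ j * v $ j) *\<^sub>R Avec"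
    unfolding v vec_eq_iff
  proof
    fix i
    have "(stoich_mat \<alpha> \<beta> *v v) $ i = (\<Sum>j\<in>UNIV. stoich_mat \<alpha> \<beta> $ i $ j * v $ j)"
      by (simp add: matrix_vector_mult_def)
    also have "\<dots> = (\<Sum>j\<in>UNIV. A i * (stoich_mat \<alpha> \<beta> $ sp1 $ j * v $ j))"
      by (intro sum.cong refl) (subst stoich_mat_eq[of i], simp add: mult_ac)
    finally show "(stoich_mat \<alpha> \<beta> *v v) $ i = ((\<Sum>j\<in>UNIV. stoich_mat \<alpha> \<beta> $ sp1 $ j * v $ j) *\<^sub>R Avec) $ i"
      by (simp add: Avec_def sum_distrib_left[symmetric] mult.commute)
  qed
  then show "w \<in> range (\<lambda>s. s *\<^sub>R Avec)" by blast
next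
  fix w assume "w \<in> range (\<lambda>s. s *\<^sub>R Avec)"
  then obtain s where s: "w = s *\<^sub>R Avec" by blast
  let ?d = "stoich_mat \<alpha> \<beta> $ sp1 $ rc1"
  have "w = stoich_mat \<alpha> \<beta> *v axis rc1 (s / ?d)"
    unfolding s vec_eq_iff
  proof
    fix i
    have "(stoich_mat \<alpha> \<beta> *v axis rc1 (s / ?d)) $ i = stoich_mat \<alpha> \<beta> $ i $ rc1 * (s / ?d)"
      by (simp add: matrix_vector_mult_def axis_def if_distrib cong: if_cong)
    then show "(s *\<^sub>R Avec) $ i = (stoich_mat \<alpha> \<beta> *v axis rc1 (s / ?d)) $ i"
      using label1 stoich_mat_eq[of i rc1] by (simp add: Avec_def)
  qed
  then show "w \<in> stoich_space \<alpha> \<beta>" unfolding stoich_space_def by blast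
qed

lemma scalar_field_has_derivative:
  "(scalar_field \<kappa> has_derivative frechet_derivative (scalar_field \<kappa>) (at y)) (at y)"
proof -
  have "(\<lambda>y::real^'s. (y$i)^\<alpha> i j) differentiable (at y)" for i j
    by (intro differentiable_power bounded_linear_imp_differentiable bounded_linear_vec_nth)
  then have "(\<lambda>y::real^'s. \<Prod>i\<in>UNIV. (y$i)^\<alpha> i j) differentiable (at y)" for j
    by (intro differentiable_prod_at) auto
  then have "scalar_field \<kappa> differentiable (at y)"
    unfolding scalar_field_def by (intro differentiable_sum differentiable_mult differentiable_const) auto
  then show ?thesis using frechet_derivative_works by blast
qed

lemma ma_jac_mult:
  "ma_jac \<alpha> \<beta> \<kappa> y *v v = frechet_derivative (scalar_field \<kappa>) (at y) v *\<^sub>R Avec"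
proof -
  have der: "(ma_field \<alpha> \<beta> \<kappa> has_derivative
      (\<lambda>v. frechet_derivative (scalar_field \<kappa>) (at y) v *\<^sub>R Avec)) (at y)"
    unfolding ma_field_eq[abs_def] by (intro has_derivative_scaleR_left scalar_field_has_derivative)
  then have "(ma_field \<alpha> \<beta> \<kappa> has_derivative (\<lambda>v. ma_jac \<alpha> \<beta> \<kappa> y *v v)) (at y)"
    unfolding ma_jac_def using jacobian_works differentiableI by blast
  from has_derivative_unique[OF this der] show ?thesis by metis
qed

lemma nondegenerate_iff: "nondegenerate \<alpha> \<beta> \<kappa> y \<longleftrightarrow> jac_eigenvalue \<kappa> y \<noteq> 0"
proof -
  let ?D = "frechet_derivative (scalar_field \<kappa>) (at y)"
  have "?D (s *\<^sub>R Avec) = s * jac_eigenvalue \<kappa> y" for s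
    using has_derivative_linear[OF scalar_field_has_derivative]
    by (simp add: jac_eigenvalue_def linear_scale)
  then have image: "(\<lambda>v. ma_jac \<alpha> \<beta> \<kappa> y *v v) ` stoich_space \<alpha> \<beta>
      = range (\<lambda>s. (s * jac_eigenvalue \<kappa> y) *\<^sub>R Avec)"
    unfolding stoich_space_eq image_image ma_jac_mult by simp
  then have nd: "nondegenerate \<alpha> \<beta> \<kappa> y \<longleftrightarrow>
      range (\<lambda>s. (s * jac_eigenvalue \<kappa> y) *\<^sub>R Avec) = range (\<lambda>s. s *\<^sub>R Avec)"
    by (simp add: nondegenerate_def stoich_space_eq)
  show ?thesis
  proof (cases "jac_eigenvalue \<kappa> y = 0")
    case True
    have "Avec \<in> range (\<lambda>s. s *\<^sub>R Avec)" by (metis rangeI scaleR_one)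
    moreover have "Avec \<notin> range (\<lambda>s. (s * jac_eigenvalue \<kappa> y) *\<^sub>R Avec)"
      using True Avec_nonzero by auto
    ultimately show ?thesis using True nd by metis
  next
    case False
    have "range (\<lambda>s. (s * jac_eigenvalue \<kappa> y) *\<^sub>R Avec) = range (\<lambda>s. s *\<^sub>R Avec)"
    proof (intro equalityI subsetI)
      fix x assume "x \<in> range (\<lambda>s. s *\<^sub>R Avec)"
      then obtain s where "x = s *\<^sub>R Avec" by blast
      then have "x = ((s / jac_eigenvalue \<kappa> y) * jac_eigenvalue \<kappa> y) *\<^sub>R Avec"
        using False by simp
      then show "x \<in> range (\<lambda>s. (s * jac_eigenvalue \<kappa> y) *\<^sub>R Avec)" by (rule range_eqI)
    qed auto
    then show ?thesis using False nd by simp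
  qed
qed

text \<open>The Jacobian is the rank-one matrix Avec times the gradient of scalar_field, so its only
  possibly nonzero eigenvalue is the derivative of scalar_field in direction Avec.\<close>
lemma complex_ma_jac_mult:
  fixes \<kappa> :: "real^'r" and y :: "real^'s" and v :: "complex^'s"
  defines "grad k \<equiv> frechet_derivative (scalar_field \<kappa>) (at y) (axis k 1)"
  shows "(\<chi> i j. complex_of_real (ma_jac \<alpha> \<beta> \<kappa> y $ i $ j)) *v v
      = (\<Sum>k\<in>UNIV. complex_of_real (grad k) * v $ k) *s (\<chi> i. complex_of_real (A i))"
  and "jac_eigenvalue \<kappa> y = (\<Sum>k\<in>UNIV. grad k * A k)"
proof -
  have lin: "linear (frechet_derivative (scalar_field \<kappa>) (at y))"
    using has_derivative_linear[OF scalar_field_has_derivative] .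
  have "ma_jac \<alpha> \<beta> \<kappa> y $ i $ k = grad k * A i" for i k
    using ma_jac_mult[of \<kappa> y "axis k 1"]
    by (simp add: grad_def Avec_def matrix_vector_mult_basis column_def vec_eq_iff)
  then show "(\<chi> i j. complex_of_real (ma_jac \<alpha> \<beta> \<kappa> y $ i $ j)) *v v
      = (\<Sum>k\<in>UNIV. complex_of_real (grad k) * v $ k) *s (\<chi> i. complex_of_real (A i))"
    by (simp add: vec_eq_iff matrix_vector_mult_def sum_distrib_left mult_ac)
  have "Avec = (\<Sum>k\<in>UNIV. A k *\<^sub>R axis k 1)"
    using basis_expansion[of Avec] by (simp add: Avec_def scalar_mult_eq_scaleR)
  then show "jac_eigenvalue \<kappa> y = (\<Sum>k\<in>UNIV. grad k * A k)"
    using lin by (simp add: jac_eigenvalue_def grad_def linear_sum linear_scale mult.commute)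
qed

lemma nonzero_eigenvalue_iff:
  assumes "z \<noteq> 0"
  shows "real_mat_eigenvalue (ma_jac \<alpha> \<beta> \<kappa> y) z \<longleftrightarrow> z = complex_of_real (jac_eigenvalue \<kappa> y)"
proof -
  define grad where "grad k = frechet_derivative (scalar_field \<kappa>) (at y) (axis k 1)" for k
  define a :: "complex^'s" where "a = (\<chi> i. complex_of_real (A i))"
  have mult: "(\<chi> i j. complex_of_real (ma_jac \<alpha> \<beta> \<kappa> y $ i $ j)) *v v
      = (\<Sum>k\<in>UNIV. complex_of_real (grad k) * v $ k) *s a" for v
    unfolding grad_def a_def by (rule complex_ma_jac_mult)
  have eig: "complex_of_real (jac_eigenvalue \<kappa> y) = (\<Sum>k\<in>UNIV. complex_of_real (grad k) * a $ k)"
    unfolding grad_def a_def complex_ma_jac_mult(2) by simp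
  have a_nz: "a \<noteq> 0" by (metis a_def coefA_sp1 of_real_1 vec_lambda_beta zero_index zero_neq_one)
  show ?thesis
  proof
    assume "real_mat_eigenvalue (ma_jac \<alpha> \<beta> \<kappa> y) z"
    then obtain v where v: "v \<noteq> 0" "(\<Sum>k\<in>UNIV. complex_of_real (grad k) * v $ k) *s a = z *s v"
      unfolding real_mat_eigenvalue_def mult by blast
    define \<sigma> where "\<sigma> = (\<Sum>k\<in>UNIV. complex_of_real (grad k) * v $ k)"
    have v_eq: "v = (\<sigma> / z) *s a"
      using v(2) assms by (simp add: \<sigma>_def vec_eq_iff field_simps)
    then have "\<sigma> \<noteq> 0" using v(1) by auto
    moreover have "\<sigma> = \<sigma> / z * complex_of_real (jac_eigenvalue \<kappa> y)"
      unfolding eig by (subst \<sigma>_def, subst v_eq) (simp add: sum_distrib_left mult_ac)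
    ultimately show "z = complex_of_real (jac_eigenvalue \<kappa> y)"
      using assms by (simp add: field_simps)
  next
    assume "z = complex_of_real (jac_eigenvalue \<kappa> y)"
    then have "(\<chi> i j. complex_of_real (ma_jac \<alpha> \<beta> \<kappa> y $ i $ j)) *v a = z *s a"
      unfolding mult eig by (simp add: mult.commute)
    with a_nz show "real_mat_eigenvalue (ma_jac \<alpha> \<beta> \<kappa> y) z"
      unfolding real_mat_eigenvalue_def by blast
  qed
qed

lemma stable_ss_iff: "stable_ss \<alpha> \<beta> \<kappa> y \<longleftrightarrow> jac_eigenvalue \<kappa> y < 0"
proof
  assume stable: "stable_ss \<alpha> \<beta> \<kappa> y"
  then have "jac_eigenvalue \<kappa> y \<noteq> 0" by (simp add: stable_ss_def nondegenerate_iff)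
  moreover have "real_mat_eigenvalue (ma_jac \<alpha> \<beta> \<kappa> y) (complex_of_real (jac_eigenvalue \<kappa> y))"
    using nonzero_eigenvalue_iff calculation by simp
  ultimately show "jac_eigenvalue \<kappa> y < 0" using stable unfolding stable_ss_def by force
next
  assume "jac_eigenvalue \<kappa> y < 0"
  then show "stable_ss \<alpha> \<beta> \<kappa> y"
    unfolding stable_ss_def nondegenerate_iff using nonzero_eigenvalue_iff by auto
qed

lemma class_point_nth [simp]: "class_point B t $ i = A i * t + B i"
  by (simp add: class_point_def)

lemma inj_class_point: "inj (class_point B)"
  by (rule injI) (metis add_right_cancel class_point_nth coefA_sp1 mult_1)

lemma coefB_sp1 [simp]: "coefB \<alpha> \<beta> sp1 rc1 c sp1 = 0"
  by (simp add: coefB_def)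

lemma coefB_realizes:
  assumes "B sp1 = 0"
  shows "coefB \<alpha> \<beta> sp1 rc1 (\<lambda>i. - stoich_mat \<alpha> \<beta> $ sp1 $ rc1 * B i) = B"
  using assms label1 by (auto simp: coefB_def)

lemma compat_class_iff:
  "x \<in> compat_class \<alpha> \<beta> sp1 rc1 c \<longleftrightarrow>
     (\<forall>i. 0 \<le> x$i) \<and> x = class_point (coefB \<alpha> \<beta> sp1 rc1 c) (x $ sp1)"
proof -
  have "(i \<noteq> sp1 \<longrightarrow> stoich_mat \<alpha> \<beta> $ i $ rc1 * x$sp1 - stoich_mat \<alpha> \<beta> $ sp1 $ rc1 * x$i = c i)
      \<longleftrightarrow> x $ i = A i * x $ sp1 + coefB \<alpha> \<beta> sp1 rc1 c i" for i
    using label1 by (cases "i = sp1") (auto simp: coefB_def stoich_mat_eq[of i rc1] field_simps)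
  then show ?thesis
    unfolding compat_class_def by (simp add: vec_eq_iff)
qed

lemma pos_steady_states_eq:
  fixes c :: "'s \<Rightarrow> real"
  defines "B \<equiv> coefB \<alpha> \<beta> sp1 rc1 c"
  shows "pos_steady_states \<alpha> \<beta> sp1 rc1 \<kappa> c
    = class_point B ` {t. (\<forall>i. 0 < A i * t + B i) \<and> scalar_field \<kappa> (class_point B t) = 0}"
proof -
  have "ma_field \<alpha> \<beta> \<kappa> x = 0 \<longleftrightarrow> scalar_field \<kappa> x = 0" for x
    using Avec_nonzero by (simp add: ma_field_eq)
  then show ?thesis
    unfolding pos_steady_states_def compat_class_iff B_def
    by (auto simp: less_imp_le intro!: image_eqI) (metis class_point_nth)
qed

lemma scalar_field_along_class_has_derivative:
  "((\<lambda>t. scalar_field \<kappa> (class_point B t)) has_real_derivative jac_eigenvalue \<kappa> (class_point B t)) (at t)"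
proof -
  have "(class_point B has_derivative (\<lambda>s. s *\<^sub>R Avec)) (at t)"
  proof -
    have "class_point B = (\<lambda>t. t *\<^sub>R Avec + (\<chi> i. B i))"
      by (auto simp: Avec_def vec_eq_iff mult.commute)
    then show ?thesis by (auto intro!: derivative_eq_intros)
  qed
  from has_derivative_compose[OF this scalar_field_has_derivative]
  have "((\<lambda>t. scalar_field \<kappa> (class_point B t)) has_derivative
      (\<lambda>s. frechet_derivative (scalar_field \<kappa>) (at (class_point B t)) (s *\<^sub>R Avec))) (at t)"
    by (simp add: o_def)
  moreover have "(\<lambda>s. frechet_derivative (scalar_field \<kappa>) (at (class_point B t)) (s *\<^sub>R Avec))
      = (*) (jac_eigenvalue \<kappa> (class_point B t))"
    using has_derivative_linear[OF scalar_field_has_derivative]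
    by (auto simp: jac_eigenvalue_def linear_scale mult.commute)
  ultimately show ?thesis by (simp add: has_field_derivative_def)
qed


lemma continuous_on_scalar_field_along_class:
  "continuous_on S (\<lambda>t. scalar_field \<kappa> (class_point B t))"
  using scalar_field_along_class_has_derivative
  by (meson DERIV_isCont continuous_at_imp_continuous_on)
end
definition class_coord :: "('s \<Rightarrow> real) \<Rightarrow> ('s \<Rightarrow> real) \<Rightarrow> 's \<Rightarrow> real \<Rightarrow> real" where
  "class_coord A B k t = (A k * t + B k) / \<bar>A k\<bar>"

lemma mem_species_class_self: "k \<in> species_class A B k"
  by (simp add: species_class_def)

lemma species_class_subset_setJ: "k \<in> setJ A \<Longrightarrow> species_class A B k \<subseteq> setJ A"
  by (auto simp: species_class_def setJ_def)

lemma species_class_eq_if_mem: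
  "k \<in> setJ A \<Longrightarrow> i \<in> species_class A B k \<Longrightarrow> species_class A B i = species_class A B k"
  by (auto simp: species_class_def setJ_def)

lemma species_class_same_sign:
  assumes "k \<in> setJ A" "i \<in> species_class A B k" "\<forall>l. 0 < A l * s + B l"
  shows "0 < A i * A k"
proof -
  have Ak: "A k \<noteq> 0" and ratio: "B i = A i * (B k / A k)"
    using assms(1,2) by (auto simp: species_class_def setJ_def field_simps)
  define u where "u = s + B k / A k"
  have "A i * s + B i = A i * u" "A k * s + B k = A k * u"
    using Ak ratio by (simp_all add: u_def field_simps)
  then have "0 < (A i * A k) * (u * u)" using assms(3) by (metis mult_pos_pos mult.commute mult.left_commute)
  then show ?thesis by (metis not_square_less_zero zero_less_mult_iff)
qed

lemma affine_eq_class_coord: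
  assumes "k \<in> setJ A" "i \<in> species_class A B k" "\<forall>l. 0 < A l * s + B l"
  shows "A i * t + B i = \<bar>A i\<bar> * class_coord A B k t"
proof -
  have ratio: "B i = A i * (B k / A k)"
    using assms(1,2) by (auto simp: species_class_def setJ_def field_simps)
  have "0 < A i * A k" by (rule species_class_same_sign[OF assms])
  then consider "0 < A k" "0 < A i" | "A k < 0" "A i < 0" by (auto simp: zero_less_mult_iff)
  then show ?thesis using ratio by cases (simp_all add: class_coord_def field_simps)
qed

lemma representative_exists:
  assumes "representatives A B R" "i \<in> setJ A"
  obtains k where "k \<in> R \<inter> setJ A" "i \<in> species_class A B k"
proof -
  obtain k where k: "k \<in> R" "i \<in> species_class A B k"
    using assms(1) unfolding representatives_def by blast
  moreover have "k \<in> setJ A"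
    using k(2) assms(2) by (auto simp: species_class_def setJ_def split: if_splits)
  ultimately show thesis using that by blast
qed

lemma representative_eq:
  assumes "representatives A B R" "k \<in> R \<inter> setJ A" "k' \<in> R \<inter> setJ A"
    "i \<in> species_class A B k" "i \<in> species_class A B k'"
  shows "k = k'"
proof -
  have "species_class A B k = species_class A B k'"
    using species_class_eq_if_mem assms(2-5) by (metis IntD2)
  then show ?thesis using assms(1-3) unfolding representatives_def by blast
qed

lemma prod_setJ_by_classes:
  fixes f :: "'s::finite \<Rightarrow> 'a::comm_monoid_mult"
  assumes "representatives A B R"
  shows "(\<Prod>i\<in>setJ A. f i) = (\<Prod>k\<in>R \<inter> setJ A. \<Prod>i\<in>species_class A B k. f i)"
proof -
  define U where "U = (\<Union>k\<in>R \<inter> setJ A. species_class A B k)"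
  have "setJ A = U"
  proof (intro equalityI subsetI)
    fix i assume "i \<in> setJ A"
    then obtain k where "k \<in> R \<inter> setJ A" "i \<in> species_class A B k"
      using representative_exists[OF assms] by blast
    then show "i \<in> U" unfolding U_def by blast
  next
    fix i assume "i \<in> U"
    then obtain k where "k \<in> setJ A" "i \<in> species_class A B k" unfolding U_def by blast
    then show "i \<in> setJ A" using species_class_subset_setJ[of k A B] by blast
  qed
  moreover have "prod f U = (\<Prod>k\<in>R \<inter> setJ A. \<Prod>i\<in>species_class A B k. f i)"
    unfolding U_def
  proof (rule prod.UNION_disjoint)
    show "\<forall>k\<in>R \<inter> setJ A. \<forall>k'\<in>R \<inter> setJ A. k \<noteq> k' \<longrightarrow> species_class A B k \<inter> species_class A B k' = {}"
      using representative_eq[OF assms] by blast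
  qed auto
  ultimately show ?thesis by simp
qed

lemma sum_species_class_eq:
  fixes \<alpha> :: "'s::finite \<Rightarrow> 'r::finite \<Rightarrow> nat"
  shows "(\<Sum>i\<in>species_class A B k. \<alpha> i j) = phi_class \<alpha> A B k + gamma_class \<alpha> A B k j"
proof -
  have "phi_class \<alpha> A B k \<le> (\<Sum>i\<in>species_class A B k. \<alpha> i j)"
    unfolding phi_class_def by (rule Min_le) auto
  then show ?thesis by (simp add: gamma_class_def)
qed

lemma monomial_by_classes:
  fixes \<alpha> :: "'s::finite \<Rightarrow> 'r::finite \<Rightarrow> nat" and y :: "'s \<Rightarrow> real"
  assumes "representatives A B R"
    and "\<forall>k\<in>R \<inter> setJ A. \<forall>i\<in>species_class A B k. y i = \<bar>A i\<bar> * w k"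
    and "\<forall>i. i \<notin> setJ A \<longrightarrow> y i = B i"
  shows "(\<Prod>i\<in>UNIV. y i ^ \<alpha> i j) = (\<Prod>i\<in>setJ A. \<bar>A i\<bar> ^ \<alpha> i j) * (\<Prod>i\<in>UNIV - setJ A. B i ^ \<alpha> i j)
      * (\<Prod>k\<in>R \<inter> setJ A. w k ^ (phi_class \<alpha> A B k + gamma_class \<alpha> A B k j))"
proof -
  let ?J = "setJ A" and ?cls = "species_class A B"
  have "(\<Prod>i\<in>?J. y i ^ \<alpha> i j) = (\<Prod>k\<in>R \<inter> ?J. \<Prod>i\<in>?cls k. \<bar>A i\<bar> ^ \<alpha> i j * w k ^ \<alpha> i j)"
    unfolding prod_setJ_by_classes[OF assms(1)] using assms(2)
    by (intro prod.cong refl) (simp add: power_mult_distrib)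
  also have "\<dots> = (\<Prod>k\<in>R \<inter> ?J. \<Prod>i\<in>?cls k. \<bar>A i\<bar> ^ \<alpha> i j)
      * (\<Prod>k\<in>R \<inter> ?J. w k ^ (\<Sum>i\<in>?cls k. \<alpha> i j))"
    by (simp add: prod.distrib power_sum)
  also have "\<dots> = (\<Prod>i\<in>?J. \<bar>A i\<bar> ^ \<alpha> i j)
      * (\<Prod>k\<in>R \<inter> ?J. w k ^ (phi_class \<alpha> A B k + gamma_class \<alpha> A B k j))"
    by (simp add: prod_setJ_by_classes[OF assms(1)] sum_species_class_eq)
  moreover have "(\<Prod>i\<in>UNIV - ?J. y i ^ \<alpha> i j) = (\<Prod>i\<in>UNIV - ?J. B i ^ \<alpha> i j)"
    using assms(3) by (intro prod.cong) auto
  moreover have "(\<Prod>i\<in>UNIV. y i ^ \<alpha> i j) = (\<Prod>i\<in>UNIV - ?J. y i ^ \<alpha> i j) * (\<Prod>i\<in>?J. y i ^ \<alpha> i j)"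
    by (rule prod.subset_diff) auto
  ultimately show ?thesis by (simp add: mult_ac)
qed


lemma positive_region_between:
  fixes a b :: "'i \<Rightarrow> real"
  assumes "\<forall>i. 0 < a i * s1 + b i" "\<forall>i. 0 < a i * s2 + b i" "s1 \<le> t" "t \<le> s2"
  shows "0 < a i * t + b i"
proof (cases "0 \<le> a i")
  case True
  have "a i * s1 \<le> a i * t" by (rule mult_left_mono[OF assms(3) True])
  moreover have "0 < a i * s1 + b i" using assms(1) by blast
  ultimately show ?thesis by linarith
next
  case False
  have "a i * s2 \<le> a i * t" by (rule mult_left_mono_neg[OF assms(4)]) (use False in simp)
  moreover have "0 < a i * s2 + b i" using assms(2) by blast
  ultimately show ?thesis by linarith
qed

lemma positive_region_is_interval: "is_interval {t::real. \<forall>i. 0 < a i * t + b i}"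
  unfolding is_interval_1
proof (intro ballI allI impI)
  fix s1 s2 t assume "s1 \<in> {t. \<forall>i. 0 < a i * t + b i}" "s2 \<in> {t. \<forall>i. 0 < a i * t + b i}" "s1 \<le> t \<and> t \<le> s2"
  then show "t \<in> {t. \<forall>i. 0 < a i * t + b i}" using positive_region_between[of a s1 b s2 t] by simp
qed

lemma positive_region_open:
  fixes a b :: "'i::finite \<Rightarrow> real"
  shows "open {t::real. \<forall>i. 0 < a i * t + b i}"
proof -
  have "{t::real. \<forall>i. 0 < a i * t + b i} = (\<Inter>i. {t. 0 < a i * t + b i})" by auto
  moreover have "open {t::real. 0 < a i * t + b i}" for i
    by (intro open_Collect_less continuous_intros)
  ultimately show ?thesis by (simp add: open_INT)
qed

lemma mem_interval_I_iff:
  assumes "A k \<noteq> 0" "0 < t"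
  shows "t \<in> interval_I A B k \<longleftrightarrow> 0 < A k * t + B k"
  using assms by (cases "0 < A k") (auto simp: interval_I_def field_simps)


locale corollary_setting = one_dim_network \<alpha> \<beta> sp1 rc1
  for \<alpha> \<beta> :: "'s::finite \<Rightarrow> 'r::finite \<Rightarrow> nat" and sp1 :: 's and rc1 :: 'r +
  fixes \<kappa> :: "real^'r" and c :: "'s \<Rightarrow> real" and N :: nat and X :: "(real^'s) set"
    and R :: "'s set" and \<tau> :: 's
  assumes network: "reaction_network \<alpha> \<beta>"
    and cap: "cap_pos \<alpha> \<beta> sp1 rc1 = enat (2 * N + 1)"
    and kpos: "\<forall>j. 0 < \<kappa> $ j"
    and X_ss: "X \<subseteq> pos_steady_states \<alpha> \<beta> sp1 rc1 \<kappa> c"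
    and X_card: "card X = 2 * N + 1"
    and X_nondeg: "\<forall>x\<in>X. nondegenerate \<alpha> \<beta> \<kappa> x"
    and reps: "representatives (coefA \<alpha> \<beta> sp1 rc1) (coefB \<alpha> \<beta> sp1 rc1 c) R"
    and sp1_H: "sp1 \<in> setH \<alpha> (coefA \<alpha> \<beta> sp1 rc1) (coefB \<alpha> \<beta> sp1 rc1 c) R"
    and tau_H: "\<tau> \<in> setH \<alpha> (coefA \<alpha> \<beta> sp1 rc1) (coefB \<alpha> \<beta> sp1 rc1 c) R"
    and tau_pos: "coefA \<alpha> \<beta> sp1 rc1 \<tau> > 0"
    and tau_left:
      "(\<Inter>k\<in>setH \<alpha> (coefA \<alpha> \<beta> sp1 rc1) (coefB \<alpha> \<beta> sp1 rc1 c) R.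
          interval_I (coefA \<alpha> \<beta> sp1 rc1) (coefB \<alpha> \<beta> sp1 rc1 c) k) \<noteq> {} \<and>
       Inf (\<Inter>k\<in>setH \<alpha> (coefA \<alpha> \<beta> sp1 rc1) (coefB \<alpha> \<beta> sp1 rc1 c) R.
          interval_I (coefA \<alpha> \<beta> sp1 rc1) (coefB \<alpha> \<beta> sp1 rc1 c) k)
        = - coefB \<alpha> \<beta> sp1 rc1 c \<tau> / coefA \<alpha> \<beta> sp1 rc1 \<tau>"
begin

abbreviation B :: "'s \<Rightarrow> real" where "B \<equiv> coefB \<alpha> \<beta> sp1 rc1 c"
abbreviation H :: "'s set" where "H \<equiv> setH \<alpha> A B R"
abbreviation I :: "real set" where "I \<equiv> \<Inter>k\<in>H. interval_I A B k"
definition t0 :: real where "t0 = - B \<tau> / A \<tau>"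

definition roots :: "real set" where
  "roots = {t. (\<forall>i. 0 < A i * t + B i) \<and> scalar_field \<kappa> (class_point B t) = 0}"

definition class_const :: "'r \<Rightarrow> real" where
  "class_const j = (\<Prod>i\<in>setJ A. \<bar>A i\<bar> ^ \<alpha> i j) * (\<Prod>i\<in>UNIV - setJ A. B i ^ \<alpha> i j)"

definition reduced_term :: "'r \<Rightarrow> real \<Rightarrow> real" where
  "reduced_term j t = stoich_mat \<alpha> \<beta> $ sp1 $ j * class_const j
     * (\<Prod>k\<in>H. class_coord A B k t ^ gamma_class \<alpha> A B k j)"

definition reduced_field :: "real^'r \<Rightarrow> real \<Rightarrow> real" where
  "reduced_field \<kappa>' t = (\<Sum>j\<in>UNIV. \<kappa>' $ j * reduced_term j t)"

lemma H_subset: "H \<subseteq> R \<inter> setJ A"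
  by (auto simp: setH_def)

lemma gamma_class_const: "k \<in> R \<inter> setJ A \<Longrightarrow> k \<notin> H \<Longrightarrow> gamma_class \<alpha> A B k j = gamma_class \<alpha> A B k j'"
  by (auto simp: setH_def)

lemma X_eq: "X = pos_steady_states \<alpha> \<beta> sp1 rc1 \<kappa> c"
proof -
  note bound = cap_pos_bound[OF cap kpos, of c]
  have "card (pos_steady_states \<alpha> \<beta> sp1 rc1 \<kappa> c) \<le> card X" using bound(2) X_card by simp
  then show ?thesis using card_seteq[OF bound(1) X_ss] by simp
qed

lemma X_eq_image_roots: "X = class_point B ` roots"
  unfolding X_eq pos_steady_states_eq roots_def ..

lemma finite_roots: "finite roots" and card_roots: "card roots = 2 * N + 1"
proof -
  have "card roots = card X"
    unfolding X_eq_image_roots by (metis card_image inj_class_point inj_on_subset subset_UNIV)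
  then show "card roots = 2 * N + 1" using X_card by simp
  then show "finite roots" by (intro card_ge_0_finite) simp
qed

lemma roots_nonempty: "roots \<noteq> {}"
  using card_roots by auto

lemma positive_region_nonempty: obtains s where "\<forall>i. 0 < A i * s + B i"
proof -
  from roots_nonempty show thesis using that by (auto simp: roots_def)
qed

lemma B_pos_outside_setJ:
  assumes "i \<notin> setJ A"
  shows "0 < B i"
proof -
  obtain s where "\<forall>l. 0 < A l * s + B l" by (rule positive_region_nonempty)
  then show ?thesis using assms by (auto simp: setJ_def dest: spec[of _ i])
qed

lemma I_pos:
  assumes "t \<in> I"
  shows "0 < t"
proof -
  have "t \<in> interval_I A B sp1" using sp1_H assms by blast
  then show ?thesis by (simp add: interval_I_def)
qed

lemma A_nonzero_H: "k \<in> H \<Longrightarrow> A k \<noteq> 0"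
  using H_subset by (auto simp: setJ_def)

lemma class_coord_pos:
  assumes "t \<in> I" "k \<in> H"
  shows "0 < class_coord A B k t"
proof -
  have "t \<in> interval_I A B k" using assms by blast
  then have "0 < A k * t + B k"
    using mem_interval_I_iff[where A = A and k = k, OF A_nonzero_H[OF assms(2)] I_pos[OF assms(1)]] by simp
  then show ?thesis using A_nonzero_H[OF assms(2)] by (simp add: class_coord_def)
qed

lemma positive_region_subset_I:
  assumes pos: "\<forall>i. 0 < A i * t + B i"
  shows "t \<in> I"
proof
  fix k assume "k \<in> H"
  have "0 < t" using spec[OF pos, of sp1] by simp
  then show "t \<in> interval_I A B k" using mem_interval_I_iff[where A = A and k = k, OF A_nonzero_H[OF \<open>k \<in> H\<close>]] pos by simp
qed

lemma I_gt_t0: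
  assumes "t \<in> I"
  shows "t0 < t"
proof -
  have "t \<in> interval_I A B \<tau>" using tau_H assms by blast
  then show ?thesis using tau_pos by (simp add: interval_I_def t0_def)
qed

lemma I_closed_between:
  assumes q: "q \<in> I" and t: "t0 < t" "t \<le> q"
  shows "t \<in> I"
proof
  have "bdd_below I" using I_gt_t0 by (meson bdd_below.I less_imp_le)
  then obtain s where s: "s \<in> I" "s < t" using cInf_less_iff[of I t] tau_left t(1) by (auto simp: t0_def)
  fix k assume "k \<in> H"
  then have "s \<in> interval_I A B k" "q \<in> interval_I A B k" using s(1) q by auto
  then show "t \<in> interval_I A B k" using s(2) t(2) by (auto simp: interval_I_def split: if_splits)
qed

lemma scalar_field_factorization:
  fixes y :: "real^'s" and w :: "'s \<Rightarrow> real"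
  assumes w_pos: "\<forall>k\<in>R \<inter> setJ A. 0 < w k" and w_H: "\<forall>k\<in>H. w k = class_coord A B k t"
    and y_J: "\<forall>k\<in>R \<inter> setJ A. \<forall>i\<in>species_class A B k. y $ i = \<bar>A i\<bar> * w k"
    and y_outside: "\<forall>i. i \<notin> setJ A \<longrightarrow> y $ i = B i"
  obtains P where "0 < P" "scalar_field \<kappa>' y = P * reduced_field \<kappa>' t"
proof -
  define P where "P = (\<Prod>k\<in>R \<inter> setJ A. w k ^ phi_class \<alpha> A B k)
    * (\<Prod>k\<in>R \<inter> setJ A - H. w k ^ gamma_class \<alpha> A B k rc1)"
  have "0 < P" unfolding P_def using w_pos by (intro mult_pos_pos prod_pos) auto
  have monomial: "(\<Prod>i\<in>UNIV. y $ i ^ \<alpha> i j)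
      = P * class_const j * (\<Prod>k\<in>H. class_coord A B k t ^ gamma_class \<alpha> A B k j)" for j
  proof -
    have "(\<Prod>k\<in>R \<inter> setJ A. w k ^ gamma_class \<alpha> A B k j)
        = (\<Prod>k\<in>R \<inter> setJ A - H. w k ^ gamma_class \<alpha> A B k j) * (\<Prod>k\<in>H. w k ^ gamma_class \<alpha> A B k j)"
      by (rule prod.subset_diff) (use H_subset in auto)
    also have "\<dots> = (\<Prod>k\<in>R \<inter> setJ A - H. w k ^ gamma_class \<alpha> A B k rc1)
        * (\<Prod>k\<in>H. class_coord A B k t ^ gamma_class \<alpha> A B k j)"
    proof (intro arg_cong2[where f = "(*)"] prod.cong refl)
      fix k assume "k \<in> R \<inter> setJ A - H"
      then show "w k ^ gamma_class \<alpha> A B k j = w k ^ gamma_class \<alpha> A B k rc1"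
        using gamma_class_const[of k j rc1] by simp
    next
      fix k assume "k \<in> H"
      then show "w k ^ gamma_class \<alpha> A B k j = class_coord A B k t ^ gamma_class \<alpha> A B k j"
        using w_H by simp
    qed
    finally have "(\<Prod>k\<in>R \<inter> setJ A. w k ^ (phi_class \<alpha> A B k + gamma_class \<alpha> A B k j))
        = P * (\<Prod>k\<in>H. class_coord A B k t ^ gamma_class \<alpha> A B k j)"
      by (simp add: P_def power_add prod.distrib mult_ac)
    then show ?thesis
      using monomial_by_classes[OF reps, of "\<lambda>i. y $ i" w \<alpha> j] y_J y_outside
      by (simp add: class_const_def mult_ac)
  qed
  have "scalar_field \<kappa>' y = P * reduced_field \<kappa>' t"
    unfolding scalar_field_def reduced_field_def reduced_term_def monomial
    by (simp add: sum_distrib_left mult_ac)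
  with \<open>0 < P\<close> show thesis by (rule that)
qed

lemma class_point_factorization:
  assumes pos: "\<forall>i. 0 < A i * t + B i"
  obtains P where "0 < P" "scalar_field \<kappa>' (class_point B t) = P * reduced_field \<kappa>' t"
proof (rule scalar_field_factorization)
  show coords: "\<forall>k\<in>R \<inter> setJ A. \<forall>i\<in>species_class A B k. class_point B t $ i = \<bar>A i\<bar> * class_coord A B k t"
    using affine_eq_class_coord pos by auto
  show "\<forall>k\<in>R \<inter> setJ A. 0 < class_coord A B k t"
  proof
    fix k assume "k \<in> R \<inter> setJ A"
    then have "0 < \<bar>A k\<bar> * class_coord A B k t"
      using coords pos mem_species_class_self by (metis class_point_nth)
    then show "0 < class_coord A B k t" by (simp add: zero_less_mult_iff)
  qed
  show "\<forall>i. i \<notin> setJ A \<longrightarrow> class_point B t $ i = B i" by (auto simp: setJ_def)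
qed (auto intro: that)

end


context corollary_setting
begin

lemma sgn_scalar_field_eq_reduced:
  assumes "\<forall>i. 0 < A i * t + B i"
  shows "sgn (scalar_field \<kappa>' (class_point B t)) = sgn (reduced_field \<kappa>' t)"
proof -
  obtain P where "0 < P" "scalar_field \<kappa>' (class_point B t) = P * reduced_field \<kappa>' t"
    using class_point_factorization[OF assms] .
  then show ?thesis by (simp add: sgn_mult)
qed

lemma reduced_field_continuous: "continuous_on S (reduced_field \<kappa>')"
  unfolding reduced_field_def reduced_term_def class_coord_def
  by (intro continuous_intros) (auto dest: A_nonzero_H)

lemma reduced_field_perturb:
  "reduced_field (\<kappa>' + \<epsilon> *\<^sub>R axis j 1) t = reduced_field \<kappa>' t + \<epsilon> * reduced_term j t"
proof -
  have "reduced_field (\<kappa>' + \<epsilon> *\<^sub>R axis j 1) t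
      = (\<Sum>j'\<in>UNIV. \<kappa>' $ j' * reduced_term j' t + (if j' = j then \<epsilon> * reduced_term j t else 0))"
    unfolding reduced_field_def by (intro sum.cong refl) (auto simp: axis_def algebra_simps)
  then show ?thesis by (simp add: sum.distrib reduced_field_def)
qed

text \<open>A root t is realised as a positive steady state by moving the species outside the
  classes in H to the class of a suitable total-constant vector; the classes in H are untouched,
  so the reduced field is unchanged.\<close>
lemma realize_roots:
  assumes "finite S" "S \<subseteq> I"
  obtains B' where "B' sp1 = 0" "\<forall>t\<in>S. \<forall>i. 0 < A i * t + B' i"
    "\<forall>t\<in>S. \<exists>P>0. scalar_field \<kappa>' (class_point B' t) = P * reduced_field \<kappa>' t"
proof -
  define b where "b = Max (insert 0 S) + 1"
  have b: "t < b" if "t \<in> S" for t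
  proof -
    have "t \<le> Max (insert 0 S)" using assms(1) that by (intro Max_ge) auto
    then show ?thesis by (simp add: b_def)
  qed
  define free where "free i \<longleftrightarrow> i \<in> setJ A \<and> (\<forall>k\<in>H. i \<notin> species_class A B k)" for i
  define B' where "B' i = (if free i then (if 0 < A i then A i else - A i * b) else B i)" for i
  define w where "w t k = (if k \<in> H then class_coord A B k t else if 0 < A k then t + 1 else b - t)" for t k
  obtain s where s: "\<forall>l. 0 < A l * s + B l" by (rule positive_region_nonempty)
  have coords: "class_point B' t $ i = \<bar>A i\<bar> * w t k"
    if k: "k \<in> R \<inter> setJ A" and i: "i \<in> species_class A B k" for t k i
  proof (cases "k \<in> H")
    case True
    then have "\<not> free i" using i by (auto simp: free_def)
    then show ?thesis using affine_eq_class_coord[OF _ i s] k True by (simp add: B'_def w_def)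
  next
    case False
    have "i \<notin> species_class A B k'" if "k' \<in> H" for k'
    proof
      assume "i \<in> species_class A B k'"
      moreover have "k' \<in> R \<inter> setJ A" using H_subset that by blast
      ultimately have "k' = k" using representative_eq[OF reps _ k _ i] by blast
      then show False using False that by simp
    qed
    moreover have "i \<in> setJ A" using species_class_subset_setJ[of k A B] k i by blast
    ultimately have "free i" by (simp add: free_def)
    have "0 < A i * A k" using species_class_same_sign[OF _ i s] k by blast
    then consider "0 < A k" "0 < A i" | "A k < 0" "A i < 0" by (auto simp: zero_less_mult_iff)
    then show ?thesis using False \<open>free i\<close> by cases (simp_all add: B'_def w_def algebra_simps)
  qed
  have w_pos: "0 < w t k" if "t \<in> S" "k \<in> R \<inter> setJ A" for t k
    using class_coord_pos I_pos b that assms(2) by (force simp: w_def)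
  have outside: "class_point B' t $ i = B i" if "i \<notin> setJ A" for t i
    using that by (simp add: B'_def free_def setJ_def)
  show thesis
  proof
    have "\<not> free sp1" using sp1_H mem_species_class_self[of sp1 A B] by (auto simp: free_def)
    then show "B' sp1 = 0" by (simp add: B'_def)
    show "\<forall>t\<in>S. \<forall>i. 0 < A i * t + B' i"
    proof (intro ballI allI)
      fix t i assume "t \<in> S"
      show "0 < A i * t + B' i"
      proof (cases "i \<in> setJ A")
        case True
        then obtain k where "k \<in> R \<inter> setJ A" "i \<in> species_class A B k"
          by (rule representative_exists[OF reps])
        then show ?thesis using coords w_pos \<open>t \<in> S\<close> True by (fastforce simp: setJ_def)
      next
        case False
        then show ?thesis using outside B_pos_outside_setJ by (metis class_point_nth)
      qed
    qed
    show "\<forall>t\<in>S. \<exists>P>0. scalar_field \<kappa>' (class_point B' t) = P * reduced_field \<kappa>' t"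
    proof
      fix t assume "t \<in> S"
      obtain P where "0 < P" "scalar_field \<kappa>' (class_point B' t) = P * reduced_field \<kappa>' t"
        by (rule scalar_field_factorization[of "w t"]) (use coords w_pos outside \<open>t \<in> S\<close> in \<open>auto simp: w_def\<close>)
      then show "\<exists>P>0. scalar_field \<kappa>' (class_point B' t) = P * reduced_field \<kappa>' t" by blast
    qed
  qed
qed

lemma card_reduced_roots_le:
  assumes "\<forall>j. 0 < \<kappa>' $ j" "finite S" "S \<subseteq> I" "\<forall>t\<in>S. reduced_field \<kappa>' t = 0"
  shows "card S \<le> 2 * N + 1"
proof -
  obtain B' where B': "B' sp1 = 0" "\<forall>t\<in>S. \<forall>i. 0 < A i * t + B' i"
    "\<forall>t\<in>S. \<exists>P>0. scalar_field \<kappa>' (class_point B' t) = P * reduced_field \<kappa>' t"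
    by (rule realize_roots[OF assms(2,3)])
  define c' where "c' i = - stoich_mat \<alpha> \<beta> $ sp1 $ rc1 * B' i" for i
  have "class_point B' ` S \<subseteq> pos_steady_states \<alpha> \<beta> sp1 rc1 \<kappa>' c'"
    unfolding pos_steady_states_eq c'_def coefB_realizes[where B = B', OF B'(1)] using B'(2,3) assms(4) by fastforce
  then have "card (class_point B' ` S) \<le> card (pos_steady_states \<alpha> \<beta> sp1 rc1 \<kappa>' c')"
    using cap_pos_bound(1)[OF cap assms(1)] by (rule card_mono[rotated])
  also have "\<dots> \<le> 2 * N + 1" using cap_pos_bound(2)[OF cap assms(1)] .
  finally show ?thesis by (simp add: card_image inj_on_subset[OF inj_class_point])
qed

lemma reduced_sign_alternations_le:
  assumes "\<forall>j. 0 < \<kappa>' $ j" "\<forall>i<m. z i < z (Suc i)" "t0 \<le> z 0" "z m \<in> I"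
    "\<forall>i<m. reduced_field \<kappa>' (z i) * reduced_field \<kappa>' (z (Suc i)) < 0"
  shows "m \<le> 2 * N + 1"
proof -
  obtain S where S: "finite S" "card S = m" "S \<subseteq> {t. z 0 < t \<and> t < z m \<and> reduced_field \<kappa>' t = 0}"
    using sign_alternations_imp_roots[OF assms(2) reduced_field_continuous assms(5)] by blast
  have "S \<subseteq> I" using S(3) assms(3,4) I_closed_between by force
  then show ?thesis using card_reduced_roots_le[OF assms(1) S(1)] S by auto
qed

end

context corollary_setting
begin

lemma class_coord_tau_t0: "class_coord A B \<tau> t0 = 0"
  using tau_pos by (simp add: class_coord_def t0_def)

lemma class_coord_t0_nonzero:
  assumes "k \<in> H" "k \<noteq> \<tau>"
  shows "class_coord A B k t0 \<noteq> 0"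
proof
  assume "class_coord A B k t0 = 0"
  then have "A k * t0 + B k = 0" using A_nonzero_H[OF assms(1)] by (simp add: class_coord_def)
  then have "B k / A k = B \<tau> / A \<tau>"
    using A_nonzero_H[OF assms(1)] tau_pos by (simp add: t0_def field_simps)
  then have "species_class A B k = species_class A B \<tau>"
    using A_nonzero_H[OF assms(1)] tau_pos by (simp add: species_class_def)
  moreover have "k \<in> R" "\<tau> \<in> R" using assms(1) tau_H H_subset by auto
  ultimately show False using reps assms(2) by (simp add: representatives_def)
qed

lemma exists_reduced_term_t0_nonzero: obtains j where "reduced_term j t0 \<noteq> 0"
proof -
  obtain j where gamma: "gamma_class \<alpha> A B \<tau> j = 0"
  proof -
    let ?f = "\<lambda>j. \<Sum>i\<in>species_class A B \<tau>. \<alpha> i j"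
    have "Min (range ?f) \<in> range ?f" by (rule Min_in) auto
    then obtain j where "Min (range ?f) = ?f j" by blast
    then show thesis using that[of j] by (simp add: gamma_class_def phi_class_def)
  qed
  have "stoich_mat \<alpha> \<beta> $ sp1 $ j \<noteq> 0"
  proof
    assume "stoich_mat \<alpha> \<beta> $ sp1 $ j = 0"
    then have "\<alpha> i j = \<beta> i j" for i
      using stoich_mat_eq[of i j] by (simp add: stoich_mat_def)
    then show False using network unfolding reaction_network_def by blast
  qed
  moreover have "class_const j \<noteq> 0"
  proof -
    have "B i \<noteq> 0" if "i \<notin> setJ A" for i using B_pos_outside_setJ[OF that] by simp
    then show ?thesis by (auto simp: class_const_def setJ_def prod_zero_iff)
  qed
  moreover have "class_coord A B k t0 ^ gamma_class \<alpha> A B k j \<noteq> 0" if "k \<in> H" for k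
    using class_coord_t0_nonzero[OF that] gamma by (cases "k = \<tau>") auto
  ultimately have "reduced_term j t0 \<noteq> 0" by (simp add: reduced_term_def prod_zero_iff)
  then show thesis by (rule that)
qed

lemma class_coord_t0: "class_coord A B k t0 = B k / \<bar>A k\<bar> - A k / \<bar>A k\<bar> * (B \<tau> / A \<tau>)"
  by (cases "A k = 0") (simp_all add: class_coord_def t0_def field_simps)

lemma reduced_field_t0_eq:
  "reduced_field \<kappa>' t0 = (\<Sum>j\<in>setL \<alpha> A B \<tau>.
      stoich_mat \<alpha> \<beta> $ sp1 $ j * \<kappa>' $ j
      * (\<Prod>i\<in>setJ A. \<bar>A i\<bar> ^ \<alpha> i j)
      * (\<Prod>i\<in>UNIV - setJ A. B i ^ \<alpha> i j)
      * (\<Prod>k\<in>H - {\<tau>}. (B k / \<bar>A k\<bar> - A k / \<bar>A k\<bar> * (B \<tau> / A \<tau>)) ^ gamma_class \<alpha> A B k j))"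
proof -
  have split_tau: "(\<Prod>k\<in>H. class_coord A B k t0 ^ gamma_class \<alpha> A B k j)
      = 0 ^ gamma_class \<alpha> A B \<tau> j * (\<Prod>k\<in>H - {\<tau>}. class_coord A B k t0 ^ gamma_class \<alpha> A B k j)" for j
    using tau_H by (simp add: prod.remove class_coord_tau_t0)
  have "reduced_field \<kappa>' t0 = (\<Sum>j\<in>setL \<alpha> A B \<tau>. \<kappa>' $ j * reduced_term j t0)"
    unfolding reduced_field_def
    by (rule sum.mono_neutral_right) (auto simp: setL_def reduced_term_def split_tau)
  also have "\<dots> = (\<Sum>j\<in>setL \<alpha> A B \<tau>.
      stoich_mat \<alpha> \<beta> $ sp1 $ j * \<kappa>' $ j
      * (\<Prod>i\<in>setJ A. \<bar>A i\<bar> ^ \<alpha> i j)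
      * (\<Prod>i\<in>UNIV - setJ A. B i ^ \<alpha> i j)
      * (\<Prod>k\<in>H - {\<tau>}. (B k / \<bar>A k\<bar> - A k / \<bar>A k\<bar> * (B \<tau> / A \<tau>)) ^ gamma_class \<alpha> A B k j))"
  proof (intro sum.cong refl)
    fix j assume "j \<in> setL \<alpha> A B \<tau>"
    then have "reduced_term j t0 = stoich_mat \<alpha> \<beta> $ sp1 $ j * class_const j
        * (\<Prod>k\<in>H - {\<tau>}. class_coord A B k t0 ^ gamma_class \<alpha> A B k j)"
      by (simp add: setL_def reduced_term_def split_tau)
    then show "\<kappa>' $ j * reduced_term j t0 = stoich_mat \<alpha> \<beta> $ sp1 $ j * \<kappa>' $ j
      * (\<Prod>i\<in>setJ A. \<bar>A i\<bar> ^ \<alpha> i j)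
      * (\<Prod>i\<in>UNIV - setJ A. B i ^ \<alpha> i j)
      * (\<Prod>k\<in>H - {\<tau>}. (B k / \<bar>A k\<bar> - A k / \<bar>A k\<bar> * (B \<tau> / A \<tau>)) ^ gamma_class \<alpha> A B k j)"
      by (simp add: class_const_def class_coord_t0 mult_ac)
  qed
  finally show ?thesis .
qed

end

lemma count_from_signed_count:
  fixes a N :: nat
  assumes "2 * int a - int (2 * N + 1) = of_bool P - of_bool Q"
  shows "a = (if P then N + 1 else N)"
  using assms by (cases P; cases Q) simp_all

lemma mult_neg_transfer:
  fixes a b a' b' :: real
  assumes "a * b < 0" "0 < a' * a" "0 < b' * b"
  shows "a' * b' < 0"
  using assms by (auto simp: mult_less_0_iff zero_less_mult_iff)

context corollary_setting
begin

lemma alternations_from_t0_le: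
  assumes "\<forall>j. 0 < \<kappa>' $ j" "\<forall>i<n. w i < w (Suc i)" "w 0 \<in> I" "w n \<in> I"
    "reduced_field \<kappa>' t0 * reduced_field \<kappa>' (w 0) < 0"
    "\<forall>i<n. reduced_field \<kappa>' (w i) * reduced_field \<kappa>' (w (Suc i)) < 0"
  shows "n \<le> 2 * N"
proof -
  define z where "z i = (if i = 0 then t0 else w (i - 1))" for i
  have "Suc n \<le> 2 * N + 1"
  proof (rule reduced_sign_alternations_le[OF assms(1)])
    show "\<forall>i<Suc n. z i < z (Suc i)"
      using I_gt_t0[OF assms(3)] assms(2) by (auto simp: z_def less_Suc_eq_0_disj)
    show "\<forall>i<Suc n. reduced_field \<kappa>' (z i) * reduced_field \<kappa>' (z (Suc i)) < 0"
      using assms(5,6) by (auto simp: z_def less_Suc_eq_0_disj)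
  qed (use assms(4) in \<open>simp_all add: z_def\<close>)
  then show ?thesis by simp
qed

lemma perturbation_keeps_alternation:
  assumes "reduced_field \<kappa> t0 = 0" "0 < n"
    "\<forall>i<n. reduced_field \<kappa> (w i) * reduced_field \<kappa> (w (Suc i)) < 0"
  obtains \<kappa>' where "\<forall>j. 0 < \<kappa>' $ j" "reduced_field \<kappa>' t0 * reduced_field \<kappa>' (w 0) < 0"
    "\<forall>i<n. reduced_field \<kappa>' (w i) * reduced_field \<kappa>' (w (Suc i)) < 0"
proof -
  obtain j where j: "reduced_term j t0 \<noteq> 0" by (rule exists_reduced_term_t0_nonzero)
  have "reduced_field \<kappa> (w i) \<noteq> 0" if "i \<le> n" for i
  proof (cases "i < n")
    case True
    then show ?thesis using assms(3) by force
  next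
    case False
    then have "i = Suc (i - 1)" "i - 1 < n" using that assms(2) by auto
    then show ?thesis using assms(3) by (metis mult_zero_right less_irrefl)
  qed
  then have nonzero: "\<forall>x\<in>w ` {..n}. reduced_field \<kappa> x \<noteq> 0" by auto
  obtain \<epsilon> where \<epsilon>: "\<bar>\<epsilon>\<bar> < \<kappa> $ j"
    "\<forall>x\<in>w ` {..n}. 0 < (reduced_field \<kappa> x + \<epsilon> * reduced_term j x) * reduced_field \<kappa> x"
    "(reduced_field \<kappa> t0 + \<epsilon> * reduced_term j t0)
       * (reduced_field \<kappa> (w 0) + \<epsilon> * reduced_term j (w 0)) < 0"
    by (rule small_perturbation_separates_root[where h = "reduced_field \<kappa>" and q = "reduced_term j"
          and e = "\<kappa> $ j" and p = "w 0", OF _ _ nonzero assms(1) j]) (use kpos in auto)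
  define \<kappa>' where "\<kappa>' = \<kappa> + \<epsilon> *\<^sub>R axis j 1"
  have \<kappa>': "reduced_field \<kappa>' t = reduced_field \<kappa> t + \<epsilon> * reduced_term j t" for t
    unfolding \<kappa>'_def by (rule reduced_field_perturb)
  show thesis
  proof
    show "\<forall>j'. 0 < \<kappa>' $ j'"
      using kpos \<epsilon>(1) by (auto simp: \<kappa>'_def axis_def abs_less_iff)
    show "reduced_field \<kappa>' t0 * reduced_field \<kappa>' (w 0) < 0" using \<epsilon>(3) by (simp add: \<kappa>')
    show "\<forall>i<n. reduced_field \<kappa>' (w i) * reduced_field \<kappa>' (w (Suc i)) < 0"
      using assms(3) \<epsilon>(2) by (auto simp: \<kappa>' intro: mult_neg_transfer)
  qed
qed

text \<open>Otherwise the reduced field, possibly after perturbing one rate constant, changes sign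
  2N + 2 times on (t0, w (2N + 1)], which exceeds the capacity.\<close>
lemma reduced_field_t0_sign:
  assumes "\<forall>i<2 * N + 1. w i < w (Suc i)" "w 0 \<in> I" "w (2 * N + 1) \<in> I"
    "\<forall>i<2 * N + 1. reduced_field \<kappa> (w i) * reduced_field \<kappa> (w (Suc i)) < 0"
  shows "0 < reduced_field \<kappa> t0 \<longleftrightarrow> 0 < reduced_field \<kappa> (w 0)"
proof (rule ccontr)
  assume wrong: "\<not> (0 < reduced_field \<kappa> t0 \<longleftrightarrow> 0 < reduced_field \<kappa> (w 0))"
  obtain \<kappa>' where \<kappa>': "\<forall>j. 0 < \<kappa>' $ j" "reduced_field \<kappa>' t0 * reduced_field \<kappa>' (w 0) < 0"
    "\<forall>i<2 * N + 1. reduced_field \<kappa>' (w i) * reduced_field \<kappa>' (w (Suc i)) < 0"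
  proof (cases "reduced_field \<kappa> t0 = 0")
    case True
    then show thesis using perturbation_keeps_alternation[OF True _ assms(4)] that by auto
  next
    case False
    have "reduced_field \<kappa> (w 0) \<noteq> 0" using assms(4) by force
    then have "reduced_field \<kappa> t0 * reduced_field \<kappa> (w 0) < 0"
      using False wrong by (auto simp: mult_less_0_iff linorder_neq_iff)
    then show thesis using that kpos assms(4) by blast
  qed
  have "2 * N + 1 \<le> 2 * N" by (rule alternations_from_t0_le[OF \<kappa>'(1) assms(1-3) \<kappa>'(2,3)])
  then show False by simp
qed

end

context corollary_setting
begin

lemma jac_eigenvalue_roots_nonzero:
  assumes "t \<in> roots"
  shows "jac_eigenvalue \<kappa> (class_point B t) \<noteq> 0"
proof -
  have "class_point B t \<in> X" unfolding X_eq_image_roots using assms by (rule imageI)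
  then show ?thesis using X_nondeg nondegenerate_iff by blast
qed

lemma interlacing_roots:
  obtains w where "\<forall>i\<le>2 * N + 1. \<forall>l. 0 < A l * w i + B l" "\<forall>i<2 * N + 1. w i < w (Suc i)"
    "\<forall>i<2 * N + 1. scalar_field \<kappa> (class_point B (w i)) * scalar_field \<kappa> (class_point B (w (Suc i))) < 0"
    "roots \<subseteq> {w 0<..<w (2 * N + 1)}"
proof -
  let ?D = "{t. \<forall>l. 0 < A l * t + B l}"
  have D: "roots \<subseteq> ?D" "roots \<noteq> {}" using roots_nonempty by (auto simp: roots_def)
  obtain w where "\<forall>i\<le>card roots. w i \<in> ?D - roots" "\<forall>i<card roots. w i < w (Suc i)"
    "\<forall>i<card roots. \<exists>t. roots \<inter> {w i..w (Suc i)} = {t}" "roots \<subseteq> {w 0<..<w (card roots)}"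
    by (rule interlacing_points[OF finite_roots D(2,1) positive_region_open positive_region_is_interval])
  note w = this[unfolded card_roots]
  have "scalar_field \<kappa> (class_point B (w i)) * scalar_field \<kappa> (class_point B (w (Suc i))) < 0"
    if i: "i < 2 * N + 1" for i
  proof -
    obtain t where t: "roots \<inter> {w i..w (Suc i)} = {t}" using w(3) i by blast
    have ends: "w i \<in> ?D" "w (Suc i) \<in> ?D" "w i \<notin> roots" "w (Suc i) \<notin> roots" using w(1) i by auto
    have "t \<in> roots" "w i \<le> t" "t \<le> w (Suc i)" using t by auto
    moreover have "t \<noteq> w i" "t \<noteq> w (Suc i)" using ends(3,4) calculation(1) by auto
    ultimately have t_between: "w i < t" "t < w (Suc i)" "t \<in> roots" by auto
    have "\<forall>s\<in>{w i..w (Suc i)}. scalar_field \<kappa> (class_point B s) = 0 \<longleftrightarrow> s = t"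
    proof
      fix s assume s: "s \<in> {w i..w (Suc i)}"
      then have "s \<in> ?D" using positive_region_between[OF ends(1,2)[unfolded mem_Collect_eq]] by simp
      moreover have "s \<in> roots \<longleftrightarrow> s = t" using s t by blast
      ultimately show "scalar_field \<kappa> (class_point B s) = 0 \<longleftrightarrow> s = t" by (simp add: roots_def)
    qed
    then show ?thesis
      by (rule simple_root_imp_sign_change[OF t_between(1,2) continuous_on_scalar_field_along_class _
            scalar_field_along_class_has_derivative jac_eigenvalue_roots_nonzero[OF t_between(3)]])
  qed
  then show thesis using that w by auto
qed

lemma card_stable_eq_card_roots:
  "card {x \<in> X. stable_ss \<alpha> \<beta> \<kappa> x} = card {t \<in> roots. jac_eigenvalue \<kappa> (class_point B t) < 0}"
proof -
  have "{x \<in> X. stable_ss \<alpha> \<beta> \<kappa> x} = class_point B ` {t \<in> roots. jac_eigenvalue \<kappa> (class_point B t) < 0}"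
    unfolding X_eq_image_roots stable_ss_iff by auto
  then show ?thesis by (simp add: card_image inj_on_subset[OF inj_class_point])
qed

lemma card_stable_steady_states:
  "card {x \<in> X. stable_ss \<alpha> \<beta> \<kappa> x} = (if 0 < reduced_field \<kappa> t0 then N + 1 else N)"
proof -
  obtain w where w: "\<forall>i\<le>2 * N + 1. \<forall>l. 0 < A l * w i + B l" "\<forall>i<2 * N + 1. w i < w (Suc i)"
    "\<forall>i<2 * N + 1. scalar_field \<kappa> (class_point B (w i)) * scalar_field \<kappa> (class_point B (w (Suc i))) < 0"
    "roots \<subseteq> {w 0<..<w (2 * N + 1)}"
    by (rule interlacing_roots)
  let ?g = "\<lambda>t. scalar_field \<kappa> (class_point B t)" and ?g' = "\<lambda>t. jac_eigenvalue \<kappa> (class_point B t)"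
  have sgn_w: "sgn (?g (w i)) = sgn (reduced_field \<kappa> (w i))" if "i \<le> 2 * N + 1" for i
    by (rule sgn_scalar_field_eq_reduced) (use w(1) that in blast)
  have sign_w0: "0 < ?g (w 0) \<longleftrightarrow> 0 < reduced_field \<kappa> t0"
  proof -
    have "reduced_field \<kappa> (w i) * reduced_field \<kappa> (w (Suc i)) < 0" if "i < 2 * N + 1" for i
    proof -
      have "sgn (reduced_field \<kappa> (w i) * reduced_field \<kappa> (w (Suc i))) = sgn (?g (w i) * ?g (w (Suc i)))"
        using sgn_w[of i] sgn_w[of "Suc i"] that by (simp add: sgn_mult)
      then show ?thesis using w(3) that by (metis sgn_less)
    qed
    moreover have "w 0 \<in> I" "w (2 * N + 1) \<in> I"
      by (rule positive_region_subset_I, use w(1) in simp)+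
    ultimately show ?thesis
      using reduced_field_t0_sign[OF w(2)] sgn_w[of 0] by (metis le0 sgn_greater)
  qed
  have "w 0 \<le> w (2 * N + 1)"
  proof -
    obtain t where "t \<in> roots" using roots_nonempty by blast
    then have "w 0 < t" "t < w (2 * N + 1)" using w(4) by auto
    then show ?thesis by linarith
  qed
  then have "(\<Sum>t\<in>roots. if ?g' t < 0 then 1 else -1)
      = of_bool (0 < ?g (w 0)) - (of_bool (0 < ?g (w (2 * N + 1))) :: int)"
  proof (rule simple_roots_signed_count[OF finite_roots w(4)])
    show "\<forall>t\<in>{w 0..w (2 * N + 1)}. ?g t = 0 \<longleftrightarrow> t \<in> roots"
    proof
      fix t assume t: "t \<in> {w 0..w (2 * N + 1)}"
      have ends: "\<forall>l. 0 < A l * w 0 + B l" "\<forall>l. 0 < A l * w (2 * N + 1) + B l" using w(1) by simp_all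
      have "\<forall>l. 0 < A l * t + B l" using positive_region_between[OF ends] t by simp
      then show "?g t = 0 \<longleftrightarrow> t \<in> roots" by (simp add: roots_def)
    qed
    show "\<forall>t\<in>roots. (?g has_real_derivative ?g' t) (at t) \<and> ?g' t \<noteq> 0"
      using scalar_field_along_class_has_derivative jac_eigenvalue_roots_nonzero by blast
  qed (rule continuous_on_scalar_field_along_class)
  then have "2 * int (card {t \<in> roots. ?g' t < 0}) - int (2 * N + 1)
      = of_bool (0 < reduced_field \<kappa> t0) - of_bool (0 < ?g (w (2 * N + 1)))"
    unfolding sum_sign_eq_card[OF finite_roots] card_roots sign_w0 .
  then show ?thesis unfolding card_stable_eq_card_roots by (rule count_from_signed_count)
qed

end
theorem corollary7p7:
  fixes \<alpha> \<beta> :: "'s::finite \<Rightarrow> 'r::finite \<Rightarrow> nat"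
    and sp1 :: 's and rc1 :: 'r
    and \<kappa> :: "real^'r" and c :: "'s \<Rightarrow> real"
    and N :: nat and X :: "(real^'s) set"
    and R :: "'s set" and \<tau> :: 's
  defines "A \<equiv> coefA \<alpha> \<beta> sp1 rc1"
    and "B \<equiv> coefB \<alpha> \<beta> sp1 rc1 c"
    and "H \<equiv> setH \<alpha> (coefA \<alpha> \<beta> sp1 rc1) (coefB \<alpha> \<beta> sp1 rc1 c) R"
  assumes network: "reaction_network \<alpha> \<beta>"
    and one_dim: "dim (stoich_space \<alpha> \<beta>) = 1"
    and label1: "stoich_mat \<alpha> \<beta> $ sp1 $ rc1 \<noteq> 0"
    and cap: "cap_pos \<alpha> \<beta> sp1 rc1 = enat (2 * N + 1)"
    and kpos: "\<forall>j. 0 < \<kappa> $ j"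
    and X_ss: "X \<subseteq> pos_steady_states \<alpha> \<beta> sp1 rc1 \<kappa> c"
    and X_card: "card X = 2 * N + 1"
    and X_nondeg: "\<forall>x\<in>X. nondegenerate \<alpha> \<beta> \<kappa> x"
    and reps: "representatives A B R"
    and sp1_H: "sp1 \<in> H"
    and tau_H: "\<tau> \<in> H"
    and tau_pos: "A \<tau> > 0"
    and tau_left: "(\<Inter>k\<in>H. interval_I A B k) \<noteq> {} \<and>
                   Inf (\<Inter>k\<in>H. interval_I A B k) = - B \<tau> / A \<tau>"
  shows "((\<Sum>j\<in>setL \<alpha> A B \<tau>.
            stoich_mat \<alpha> \<beta> $ sp1 $ j * \<kappa> $ j
            * (\<Prod>i\<in>setJ A. \<bar>A i\<bar> ^ \<alpha> i j)
            * (\<Prod>i\<in>UNIV - setJ A. B i ^ \<alpha> i j)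
            * (\<Prod>k\<in>H - {\<tau>}. (B k / \<bar>A k\<bar> - A k / \<bar>A k\<bar> * (B \<tau> / A \<tau>))
                                   ^ gamma_class \<alpha> A B k j)) > 0 \<longrightarrow> card {x \<in> X. stable_ss \<alpha> \<beta> \<kappa> x} = N + 1)
       \<and> (\<not> (\<Sum>j\<in>setL \<alpha> A B \<tau>.
            stoich_mat \<alpha> \<beta> $ sp1 $ j * \<kappa> $ j
            * (\<Prod>i\<in>setJ A. \<bar>A i\<bar> ^ \<alpha> i j)
            * (\<Prod>i\<in>UNIV - setJ A. B i ^ \<alpha> i j)
            * (\<Prod>k\<in>H - {\<tau>}. (B k / \<bar>A k\<bar> - A k / \<bar>A k\<bar> * (B \<tau> / A \<tau>))
                                   ^ gamma_class \<alpha> A B k j)) > 0 \<longrightarrow> card {x \<in> X. stable_ss \<alpha> \<beta> \<kappa> x} = N)"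
proof -
  interpret corollary_setting \<alpha> \<beta> sp1 rc1 \<kappa> c N X R \<tau>
    using network one_dim label1 cap kpos X_ss X_card X_nondeg reps sp1_H tau_H tau_pos tau_left
    unfolding A_def B_def H_def by unfold_locales auto
  show ?thesis
    unfolding A_def B_def H_def reduced_field_t0_eq[symmetric] card_stable_steady_states by simp
qed

end
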